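(* Let $u$ be a distribution on $\mathbb{F}^n$ that is homogeneous of some degree $\chi_\Lambda$. Then: (1) for $x\neq0$ and $\xi\neq0$: $(x,\xi)\in\mathrm{WF}(u)$ if and only if $(\xi,-x)\in\mathrm{WF}(\mathcal F u)$; (2) for $x\neq0$: $x\in\mathrm{supp}\,u$ if and only if $(0,-x)\in\mathrm{WF}(\mathcal F u)$; (3) for $\xi\neq0$: $\xi\in\mathrm{supp}\,\mathcal F u$ if and only if $(0,\xi)\in\mathrm{WF}(u)$.
   Context: $\mathbb{F}$ is a non-archimedean local field of characteristic $0$ with ring of integers $\mathfrak o_{\mathbb{F}}$, uniformizer $\varpi$, absolute value $|\cdot|$, $|x|=\max_i|x_i|$ on $\mathbb{F}^n$; $\chi$ is a character of $(\mathbb{F},+)$ with kernel $\mathfrak o_{\mathbb{F}}$; $\mathcal F\phi(\xi)=\int\phi(x)\chi(-x\cdot\xi)dx$ with $x\cdot\xi=\sum x_j\xi_j$ and self-dual Haar measure, extended to distributions by $\mathcal F u(\phi)=u(\mathcal F\phi)$ (and to compactly supported $v$ by $\mathcal Fv(\xi)=v(\chi(-\,\cdot\,\xi))$). $\mathcal S(\mathbb{F}^n)$: locally constant compactly supported functions; distributions: its dual. A finite index subgroup $\Lambda\subseteq\mathbb{F}^\times$ with $\varpi\in\Lambda$ is fixed. A distribution $u$ is homogeneous of degree $\chi_\Lambda$, for a homomorphism $\chi_\Lambda:\Lambda\to\mathbb C^\times$, if $u(\phi_\lambda)=\chi_\Lambda(\lambda)u(\phi)$ for all $\lambda\in\Lambda$,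 $\phi\in\mathcal S(\mathbb{F}^n)$, where $\phi_\lambda(x)=|\lambda|^{-n}\phi(\lambda^{-1}x)$. A cone is a $\Lambda$-stable subset of $\mathbb{F}^n\setminus0$; $\mathrm{AC}(A)$ is the complement in $\mathbb{F}^n\setminus0$ of the union of open cones meeting $A$ in a bounded set; for compactly supported $v$, $\Sigma(v)=\mathrm{AC}(\mathrm{supp}\,\mathcal F v)$; $\Sigma_x(u)=\bigcap_{\phi\in\mathcal S,\phi(x)\neq0}\Sigma(\phi u)$; $\mathrm{WF}(u)=\{(x,\xi)\in\mathbb{F}^n\times(\mathbb{F}^n\setminus0):\xi\in\Sigma_x(u)\}$. *)

theory Defs
  imports Complex_Main "HOL-Library.Function_Algebras"
begin

text \<open>av is the normalized absolute value, w a uniformizer. A non-archimedean local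
field is a field complete for a discrete non-archimedean absolute value with finite
residue field; the absolute value is normalized: |w| = 1/q, q = size of residue field.\<close>

definition nonarch_local_field :: "('a::field_char_0 \<Rightarrow> real) \<Rightarrow> 'a \<Rightarrow> bool" where
  "nonarch_local_field av w \<longleftrightarrow>
     av 0 = 0 \<and> (\<forall>x. x \<noteq> 0 \<longrightarrow> av x > 0) \<and>
     (\<forall>x y. av (x * y) = av x * av y) \<and>
     (\<forall>x y. av (x + y) \<le> max (av x) (av y)) \<and>
     w \<noteq> 0 \<and> av w < 1 \<and>
     (\<forall>x. x \<noteq> 0 \<longrightarrow> (\<exists>k::int. av x = av w powi k)) \<and>
     (\<exists>R. finite R \<and> R \<subseteq> {x. av x \<le> 1} \<and>
          (\<forall>x. av x \<le> 1 \<longrightarrow> (\<exists>!r. r \<in> R \<and> av (x - r) < 1)) \<and>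
          av w = 1 / real (card R)) \<and>
     (\<forall>f :: nat \<Rightarrow> 'a. (\<forall>e>0. \<exists>N. \<forall>m\<ge>N. \<forall>n\<ge>N. av (f m - f n) < e) \<longrightarrow>
          (\<exists>L. \<forall>e>0. \<exists>N. \<forall>n\<ge>N. av (f n - L) < e))"

definition additive_char :: "('a::field_char_0 \<Rightarrow> real) \<Rightarrow> ('a \<Rightarrow> complex) \<Rightarrow> bool" where
  "additive_char av \<chi> \<longleftrightarrow>
     (\<forall>x y. \<chi> (x + y) = \<chi> x * \<chi> y) \<and> (\<forall>x. cmod (\<chi> x) = 1) \<and>
     (\<forall>x. \<chi> x = 1 \<longleftrightarrow> av x \<le> 1)"

definition nrm :: "('a \<Rightarrow> real) \<Rightarrow> ('n::finite \<Rightarrow> 'a) \<Rightarrow> real" where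
  "nrm av x = Max (range (\<lambda>i. av (x i)))"

definition dotp :: "('n::finite \<Rightarrow> 'a::comm_ring) \<Rightarrow> ('n \<Rightarrow> 'a) \<Rightarrow> 'a" where
  "dotp x y = (\<Sum>i\<in>UNIV. x i * y i)"

definition smul :: "'a::times \<Rightarrow> ('n \<Rightarrow> 'a) \<Rightarrow> ('n \<Rightarrow> 'a)" where
  "smul c x = (\<lambda>i. c * x i)"

definition openF :: "('a::ab_group_add \<Rightarrow> real) \<Rightarrow> ('n::finite \<Rightarrow> 'a) set \<Rightarrow> bool" where
  "openF av U \<longleftrightarrow> (\<forall>x\<in>U. \<exists>r>0. \<forall>y. nrm av (y - x) < r \<longrightarrow> y \<in> U)"

definition closureF :: "('a::ab_group_add \<Rightarrow> real) \<Rightarrow> ('n::finite \<Rightarrow> 'a) set \<Rightarrow> ('n \<Rightarrow> 'a) set" where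
  "closureF av A = {x. \<forall>r>0. \<exists>y\<in>A. nrm av (y - x) < r}"

definition boundedF :: "('a \<Rightarrow> real) \<Rightarrow> ('n::finite \<Rightarrow> 'a) set \<Rightarrow> bool" where
  "boundedF av A \<longleftrightarrow> (\<exists>C. \<forall>x\<in>A. nrm av x \<le> C)"

text \<open>Schwartz--Bruhat space: locally constant functions with compact support
(support is clopen for locally constant functions, and compact = closed and bounded).\<close>
definition SF :: "('a::ab_group_add \<Rightarrow> real) \<Rightarrow> (('n::finite \<Rightarrow> 'a) \<Rightarrow> complex) set" where
  "SF av = {\<phi>. (\<forall>x. \<exists>r>0. \<forall>y. nrm av (y - x) < r \<longrightarrow> \<phi> y = \<phi> x) \<and>
               boundedF av (closureF av {x. \<phi> x \<noteq> 0})}"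

definition FT :: "((('n::finite \<Rightarrow> 'a::comm_ring) \<Rightarrow> complex) \<Rightarrow> complex) \<Rightarrow> ('a \<Rightarrow> complex)
                  \<Rightarrow> (('n \<Rightarrow> 'a) \<Rightarrow> complex) \<Rightarrow> (('n \<Rightarrow> 'a) \<Rightarrow> complex)" where
  "FT I \<chi> \<phi> = (\<lambda>\<xi>. I (\<lambda>x. \<phi> x * \<chi> (- dotp x \<xi>)))"

text \<open>Integration against the self-dual Haar measure: a positive, translation invariant
linear functional on S for which Fourier inversion holds in the self-dual form.\<close>
definition self_dual_haar :: "('a::field_char_0 \<Rightarrow> real) \<Rightarrow> ('a \<Rightarrow> complex)
        \<Rightarrow> ((('n::finite \<Rightarrow> 'a) \<Rightarrow> complex) \<Rightarrow> complex) \<Rightarrow> bool" where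
  "self_dual_haar av \<chi> I \<longleftrightarrow>
     (\<forall>\<phi>\<in>SF av. \<forall>\<psi>\<in>SF av. I (\<lambda>x. \<phi> x + \<psi> x) = I \<phi> + I \<psi>) \<and>
     (\<forall>\<phi>\<in>SF av. \<forall>c. I (\<lambda>x. c * \<phi> x) = c * I \<phi>) \<and>
     (\<forall>\<phi>\<in>SF av. \<forall>a. I (\<lambda>x. \<phi> (x + a)) = I \<phi>) \<and>
     (\<forall>\<phi>\<in>SF av. (\<forall>x. Im (\<phi> x) = 0 \<and> Re (\<phi> x) \<ge> 0) \<longrightarrow> Im (I \<phi>) = 0 \<and> Re (I \<phi>) \<ge> 0) \<and>
     (\<forall>\<phi>\<in>SF av. \<forall>x. FT I \<chi> (FT I \<chi> \<phi>) x = \<phi> (- x))"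

definition distribution :: "('a::ab_group_add \<Rightarrow> real) \<Rightarrow> ((('n::finite \<Rightarrow> 'a) \<Rightarrow> complex) \<Rightarrow> complex) \<Rightarrow> bool" where
  "distribution av u \<longleftrightarrow>
     (\<forall>\<phi>\<in>SF av. \<forall>\<psi>\<in>SF av. u (\<lambda>x. \<phi> x + \<psi> x) = u \<phi> + u \<psi>) \<and>
     (\<forall>\<phi>\<in>SF av. \<forall>c. u (\<lambda>x. c * \<phi> x) = c * u \<phi>)"

definition FTd :: "((('n::finite \<Rightarrow> 'a::comm_ring) \<Rightarrow> complex) \<Rightarrow> complex) \<Rightarrow> ('a \<Rightarrow> complex)
     \<Rightarrow> ((('n \<Rightarrow> 'a) \<Rightarrow> complex) \<Rightarrow> complex) \<Rightarrow> ((('n \<Rightarrow> 'a) \<Rightarrow> complex) \<Rightarrow> complex)" where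
  "FTd I \<chi> u = (\<lambda>\<phi>. u (FT I \<chi> \<phi>))"

text \<open>Support of a distribution: complement of the largest open set on which it vanishes.\<close>
definition suppd :: "('a::ab_group_add \<Rightarrow> real) \<Rightarrow> ((('n::finite \<Rightarrow> 'a) \<Rightarrow> complex) \<Rightarrow> complex) \<Rightarrow> ('n \<Rightarrow> 'a) set" where
  "suppd av u = {x. \<forall>U. openF av U \<and> x \<in> U \<longrightarrow>
       (\<exists>\<phi>\<in>SF av. closureF av {y. \<phi> y \<noteq> 0} \<subseteq> U \<and> u \<phi> \<noteq> 0)}"

definition suppf :: "('a::ab_group_add \<Rightarrow> real) \<Rightarrow> (('n::finite \<Rightarrow> 'a) \<Rightarrow> complex) \<Rightarrow> ('n \<Rightarrow> 'a) set" where
  "suppf av f = closureF av {x. f x \<noteq> 0}"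

definition mult_d :: "(('n \<Rightarrow> 'a) \<Rightarrow> complex) \<Rightarrow> ((('n \<Rightarrow> 'a) \<Rightarrow> complex) \<Rightarrow> complex)
     \<Rightarrow> ((('n \<Rightarrow> 'a) \<Rightarrow> complex) \<Rightarrow> complex)" where
  "mult_d \<phi> u = (\<lambda>\<psi>. u (\<lambda>y. \<phi> y * \<psi> y))"

text \<open>A compactly supported distribution v applied to an arbitrary locally constant
function psi: v(rho psi) with rho in S equal to 1 on a neighbourhood of supp v.\<close>
definition cs_ext :: "('a::ab_group_add \<Rightarrow> real) \<Rightarrow> ((('n::finite \<Rightarrow> 'a) \<Rightarrow> complex) \<Rightarrow> complex)
     \<Rightarrow> (('n \<Rightarrow> 'a) \<Rightarrow> complex) \<Rightarrow> complex" where
  "cs_ext av v \<psi> =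
     (let \<rho> = (SOME \<rho>. \<rho> \<in> SF av \<and> (\<exists>U. openF av U \<and> suppd av v \<subseteq> U \<and> (\<forall>x\<in>U. \<rho> x = 1)))
      in v (\<lambda>x. \<rho> x * \<psi> x))"

definition FTcs :: "('a::comm_ring \<Rightarrow> real) \<Rightarrow> ('a \<Rightarrow> complex) \<Rightarrow> ((('n::finite \<Rightarrow> 'a) \<Rightarrow> complex) \<Rightarrow> complex)
     \<Rightarrow> ('n \<Rightarrow> 'a) \<Rightarrow> complex" where
  "FTcs av \<chi> v = (\<lambda>\<xi>. cs_ext av v (\<lambda>x. \<chi> (- dotp x \<xi>)))"

definition fin_index_subgroup :: "'a::field set \<Rightarrow> bool" where
  "fin_index_subgroup \<Lambda> \<longleftrightarrow>
     \<Lambda> \<subseteq> {x. x \<noteq> 0} \<and> 1 \<in> \<Lambda> \<and> (\<forall>a\<in>\<Lambda>. \<forall>b\<in>\<Lambda>. a * b \<in> \<Lambda>) \<and>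
     (\<forall>a\<in>\<Lambda>. inverse a \<in> \<Lambda>) \<and>
     (\<exists>R. finite R \<and> R \<subseteq> {x. x \<noteq> 0} \<and> (\<forall>x. x \<noteq> 0 \<longrightarrow> (\<exists>r\<in>R. x * inverse r \<in> \<Lambda>)))"

definition dil :: "('a::field \<Rightarrow> real) \<Rightarrow> 'a \<Rightarrow> (('n::finite \<Rightarrow> 'a) \<Rightarrow> complex) \<Rightarrow> (('n \<Rightarrow> 'a) \<Rightarrow> complex)" where
  "dil av c \<phi> = (\<lambda>x. complex_of_real (av c powi (- int (card (UNIV :: 'n set)))) * \<phi> (smul (inverse c) x))"

definition homogeneous :: "('a::field \<Rightarrow> real) \<Rightarrow> 'a set \<Rightarrow> ('a \<Rightarrow> complex)
     \<Rightarrow> ((('n::finite \<Rightarrow> 'a) \<Rightarrow> complex) \<Rightarrow> complex) \<Rightarrow> bool" where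
  "homogeneous av \<Lambda> chiL u \<longleftrightarrow>
     (\<forall>a\<in>\<Lambda>. \<forall>b\<in>\<Lambda>. chiL (a * b) = chiL a * chiL b) \<and> (\<forall>a\<in>\<Lambda>. chiL a \<noteq> 0) \<and>
     (\<forall>c\<in>\<Lambda>. \<forall>\<phi>\<in>SF av. u (dil av c \<phi>) = chiL c * u \<phi>)"

definition is_cone :: "'a::field set \<Rightarrow> ('n \<Rightarrow> 'a) set \<Rightarrow> bool" where
  "is_cone \<Lambda> \<Gamma> \<longleftrightarrow> \<Gamma> \<subseteq> {x. x \<noteq> 0} \<and> (\<forall>c\<in>\<Lambda>. \<forall>x\<in>\<Gamma>. smul c x \<in> \<Gamma>)"

definition AC :: "('a::field \<Rightarrow> real) \<Rightarrow> 'a set \<Rightarrow> ('n::finite \<Rightarrow> 'a) set \<Rightarrow> ('n \<Rightarrow> 'a) set" where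
  "AC av \<Lambda> A = {x. x \<noteq> 0} -
     \<Union>{\<Gamma>. is_cone \<Lambda> \<Gamma> \<and> openF av \<Gamma> \<and> boundedF av (\<Gamma> \<inter> A)}"

definition Sigma_cs :: "('a::field \<Rightarrow> real) \<Rightarrow> 'a set \<Rightarrow> ('a \<Rightarrow> complex)
     \<Rightarrow> ((('n::finite \<Rightarrow> 'a) \<Rightarrow> complex) \<Rightarrow> complex) \<Rightarrow> ('n \<Rightarrow> 'a) set" where
  "Sigma_cs av \<Lambda> \<chi> v = AC av \<Lambda> (suppf av (FTcs av \<chi> v))"

definition Sigma_at :: "('a::field \<Rightarrow> real) \<Rightarrow> 'a set \<Rightarrow> ('a \<Rightarrow> complex)
     \<Rightarrow> ((('n::finite \<Rightarrow> 'a) \<Rightarrow> complex) \<Rightarrow> complex) \<Rightarrow> ('n \<Rightarrow> 'a) \<Rightarrow> ('n \<Rightarrow> 'a) set" where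
  "Sigma_at av \<Lambda> \<chi> u x = (\<Inter>\<phi>\<in>{\<phi>\<in>SF av. \<phi> x \<noteq> 0}. Sigma_cs av \<Lambda> \<chi> (mult_d \<phi> u))"

definition WF :: "('a::field \<Rightarrow> real) \<Rightarrow> 'a set \<Rightarrow> ('a \<Rightarrow> complex)
     \<Rightarrow> ((('n::finite \<Rightarrow> 'a) \<Rightarrow> complex) \<Rightarrow> complex) \<Rightarrow> (('n \<Rightarrow> 'a) \<times> ('n \<Rightarrow> 'a)) set" where
  "WF av \<Lambda> \<chi> u = {(x, \<xi>). \<xi> \<noteq> 0 \<and> \<xi> \<in> Sigma_at av \<Lambda> \<chi> u x}"

end

theory Submission
  imports Defs "HOL-Library.FuncSet" "HOL-Library.Indicator_Function"
begin

text \<open>Everything is reduced to wave packets: plane waves of frequency \<eta> cut off to a ball of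
  radius |w|^k around a. The Fourier transform of such a packet is, up to a nonzero factor, the
  packet around -\<eta> of radius |w|^-k with frequency a, so position and frequency are exchanged.
  Testing a distribution against packets detects both its support (small balls, frequency 0) and
  its wave front set (nonvanishing on packets of arbitrarily large frequency in every cone around
  \<xi>). Homogeneity makes the zero set of the distribution on packets invariant under dilation by
  \<Lambda>, which trades large frequencies for large centres and small radii; combined with the
  exchange of position and frequency this gives all three statements. Supports and wave front sets
  are read off from packets by cutting a test function into indicators of small balls (local
  constancy and compactness) and by averaging plane waves over a ball of frequencies
  (Fubini against the Haar integral).\<close>

locale local_field_fourier =
  fixes av :: "'a::field_char_0 \<Rightarrow> real" and w :: 'a and \<chi> :: "'a \<Rightarrow> complex"
    and I :: "(('n::finite \<Rightarrow> 'a) \<Rightarrow> complex) \<Rightarrow> complex"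
    and \<Lambda> :: "'a set"
  assumes local_field: "nonarch_local_field av w"
    and additive: "additive_char av \<chi>"
    and haar: "self_dual_haar av \<chi> I"
    and finite_index: "fin_index_subgroup \<Lambda>" and unif_in_Lambda: "w \<in> \<Lambda>"
begin

lemma av_0[simp]: "av 0 = 0" using local_field unfolding nonarch_local_field_def by blast
lemma av_pos: "x \<noteq> 0 \<Longrightarrow> av x > 0" using local_field unfolding nonarch_local_field_def by blast
lemma av_mult: "av (x * y) = av x * av y" using local_field unfolding nonarch_local_field_def by blast
lemma av_ultra: "av (x + y) \<le> max (av x) (av y)" using local_field unfolding nonarch_local_field_def by blast
lemma av_unif_less_1: "av w < 1" using local_field unfolding nonarch_local_field_def by blast
lemma unif_nonzero[simp]: "w \<noteq> 0" using local_field unfolding nonarch_local_field_def by blast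
lemma av_discrete: "x \<noteq> 0 \<Longrightarrow> \<exists>k::int. av x = av w powi k" using local_field unfolding nonarch_local_field_def by blast
lemma av_complete: fixes f :: "nat \<Rightarrow> 'a" shows "(\<forall>e>0. \<exists>N. \<forall>m\<ge>N. \<forall>n\<ge>N. av (f m - f n) < e) \<Longrightarrow>
          (\<exists>L. \<forall>e>0. \<exists>N. \<forall>n\<ge>N. av (f n - L) < e)"
proof -
  assume a: "\<forall>e>0. \<exists>N. \<forall>m\<ge>N. \<forall>n\<ge>N. av (f m - f n) < e"
  have "\<forall>f :: nat \<Rightarrow> 'a. (\<forall>e>0. \<exists>N. \<forall>m\<ge>N. \<forall>n\<ge>N. av (f m - f n) < e) \<longrightarrow>
          (\<exists>L. \<forall>e>0. \<exists>N. \<forall>n\<ge>N. av (f n - L) < e)"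
    using local_field unfolding nonarch_local_field_def by (elim conjE) assumption
  then show ?thesis using a by blast
qed
lemma residue_field: "\<exists>R. finite R \<and> R \<subseteq> {x. av x \<le> 1} \<and>
          (\<forall>x. av x \<le> 1 \<longrightarrow> (\<exists>!r. r \<in> R \<and> av (x - r) < 1))"
  using local_field unfolding nonarch_local_field_def by blast

lemma av_nonneg[simp]: "av x \<ge> 0"
  by (cases "x = 0") (auto dest: av_pos)
lemma av_eq_0[simp]: "av x = 0 \<longleftrightarrow> x = 0"
  using av_pos by fastforce
lemma av_unif_pos[simp]: "av w > 0" using av_pos by simp
lemma av_1[simp]: "av 1 = 1"
proof -
  have "av 1 = av 1 * av 1" using av_mult[of 1 1] by simp
  moreover have "av 1 > 0" using av_pos[of 1] by simp
  ultimately show ?thesis by simp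
qed
lemma av_minus_1[simp]: "av (-1) = 1"
proof -
  have "av (-1) * av (-1) = 1" using av_mult[of "-1" "-1"] by simp
  moreover have "av (-1) \<ge> 0" by simp
  ultimately show ?thesis by (metis abs_of_nonneg abs_square_eq_1 power2_eq_square)
qed
lemma av_uminus[simp]: "av (- x) = av x"
  using av_mult[of "-1" x] by simp
lemma av_commute: "av (x - y) = av (y - x)"
  by (metis av_uminus minus_diff_eq)
lemma av_diff: "av (x - y) \<le> max (av x) (av y)"
  using av_ultra[of x "-y"] by simp
lemma av_inverse: "av (inverse x) = inverse (av x)"
proof (cases "x = 0")
  case False
  then have "av x * av (inverse x) = 1" using av_mult[of x "inverse x"] by simp
  from inverse_unique[OF this] show ?thesis by simp
qed simp
lemma av_divide: "av (x / y) = av x / av y"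
  by (simp add: divide_inverse av_mult av_inverse)
lemma av_powi: "av (w powi k) = av w powi k"
proof -
  have p: "av (x ^ n) = av x ^ n" for x n by (induction n) (auto simp: av_mult)
  show ?thesis
    by (cases "k \<ge> 0") (auto simp: power_int_def p av_inverse power_inverse)
qed
lemma av_sum_le: "finite A \<Longrightarrow> r \<ge> 0 \<Longrightarrow> (\<And>i. i \<in> A \<Longrightarrow> av (f i) \<le> r) \<Longrightarrow> av (sum f A) \<le> r"
proof (induction A rule: finite_induct)
  case (insert a A)
  have h1: "av (sum f A) \<le> r" "av (f a) \<le> r" using insert by auto
  have "av (f a + sum f A) \<le> max (av (f a)) (av (sum f A))" by (rule av_ultra)
  also have "\<dots> \<le> r" using h1 by simp
  finally show ?case using insert by simp
qed simp
lemma av_add_dominant: "av y < av x \<Longrightarrow> av (x + y) = av x"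
proof -
  assume a: "av y < av x"
  have "av (x + y) \<le> av x" using av_ultra[of x y] a by simp
  moreover have "av x \<le> max (av (x + y)) (av y)" using av_ultra[of "x + y" "-y"] by simp
  ultimately show ?thesis using a by linarith
qed

definition rad :: "int \<Rightarrow> real" where "rad k = av w powi k"

lemma rad_pos[simp]: "rad k > 0" unfolding rad_def by simp
lemma rad_nonzero[simp]: "rad k \<noteq> 0" unfolding rad_def by simp
lemma rad_nonneg[simp]: "rad k \<ge> 0" using rad_pos less_imp_le by blast
lemma rad_add: "rad (a + b) = rad a * rad b"
  unfolding rad_def by (simp add: power_int_add)
lemma rad_0[simp]: "rad 0 = 1" unfolding rad_def by simp
lemma rad_minus: "rad (- k) = inverse (rad k)" unfolding rad_def by (simp add: power_int_minus)
lemma rad_diff: "rad (a - b) = rad a / rad b"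
  using rad_add[of a "-b"] by (simp add: rad_minus divide_inverse)
lemma rad_strict: "k < k' \<Longrightarrow> rad k' < rad k"
  unfolding rad_def using av_unif_less_1 by (intro power_int_strict_decreasing) auto
lemma rad_mono: "k \<le> k' \<Longrightarrow> rad k' \<le> rad k"
  using rad_strict by (cases "k = k'") (auto intro: less_imp_le)
lemma rad_less_iff: "rad k' < rad k \<longleftrightarrow> k < k'"
  using rad_strict rad_mono by (meson not_le)
lemma rad_le_iff: "rad k' \<le> rad k \<longleftrightarrow> k \<le> k'"
  using rad_strict rad_mono by (meson not_le)
lemma av_unif_powi: "av (w powi k) = rad k" unfolding rad_def by (simp add: av_powi)
lemma rad_1: "rad 1 = av w" unfolding rad_def by simp
lemma rad_big: "\<exists>k. rad k > C"
proof -
  have "1 < inverse (av w)" using av_unif_less_1 by (simp add: one_less_inverse)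
  then obtain n where n: "C < inverse (av w) ^ n" using real_arch_pow by blast
  have "rad (- int n) = inverse (av w) ^ n" unfolding rad_def
    by (simp add: power_int_minus power_inverse)
  then show ?thesis using n by metis
qed
lemma rad_small: "e > 0 \<Longrightarrow> \<exists>k. rad k < e"
proof -
  assume e: "e > 0"
  obtain k where "rad k > inverse e" using rad_big by blast
  then have "rad (- k) < e" using e by (simp add: rad_minus inverse_less_imp_less)
  then show ?thesis by blast
qed
lemma rad_big_ge: "\<exists>k. k \<le> k0 \<and> rad k > C"
proof -
  obtain k where "rad k > C" using rad_big by blast
  then have "rad (min k k0) > C" using rad_mono[of "min k k0" k] by linarith
  then show ?thesis by (intro exI[of _ "min k k0"]) auto
qed
lemma rad_small_ge: "e > 0 \<Longrightarrow> \<exists>k. k \<ge> k0 \<and> rad k < e"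
proof -
  assume "e > 0"
  then obtain k where "rad k < e" using rad_small by blast
  then have "rad (max k k0) < e" using rad_mono[of k "max k k0"] by linarith
  then show ?thesis by (intro exI[of _ "max k k0"]) auto
qed

lemma rad_uminus_big: "\<exists>t. t \<ge> t0 \<and> rad (- t) > C"
proof -
  obtain k where "k \<le> - t0" "rad k > C" using rad_big_ge by blast
  then show ?thesis by (intro exI[of _ "- k"]) auto
qed

lemma rad_mult_le_1:
  assumes "R \<ge> 0"
  obtains M where "M \<ge> r" "rad M * R \<le> 1"
proof -
  obtain M where M: "M \<ge> r" "rad M < inverse (R + 1)"
    using rad_small_ge[of "inverse (R + 1)" r] assms by auto
  have "rad M * R \<le> inverse (R + 1) * R" using M(2) assms by (intro mult_right_mono) auto
  also have "\<dots> \<le> 1" using assms by (simp add: field_simps)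
  finally show ?thesis using that M(1) by blast
qed

lemma av_eq_rad: "x \<noteq> 0 \<Longrightarrow> \<exists>k. av x = rad k"
  using av_discrete unfolding rad_def by blast

lemma av_gt_rad_imp_ge: "av x > rad k \<Longrightarrow> av x \<ge> rad (k - 1)"
proof -
  assume a: "av x > rad k"
  then have "x \<noteq> 0" using rad_pos by (metis av_0 not_less_iff_gr_or_eq)
  then obtain j where j: "av x = rad j" using av_eq_rad by blast
  then have "j < k" using a rad_less_iff by simp
  then show ?thesis using j rad_le_iff by simp
qed


lemma chi_add: "\<chi> (x + y) = \<chi> x * \<chi> y" using additive unfolding additive_char_def by blast
lemma chi_cmod: "cmod (\<chi> x) = 1" using additive unfolding additive_char_def by blast
lemma chi_eq_1_iff: "\<chi> x = 1 \<longleftrightarrow> av x \<le> 1" using additive unfolding additive_char_def by blast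
lemma chi_nonzero[simp]: "\<chi> x \<noteq> 0" using chi_cmod[of x] by auto
lemma chi_0[simp]: "\<chi> 0 = 1" using chi_eq_1_iff by simp

section \<open>The sup norm, plane waves and balls\<close>

lemma nrm_ge_component: "av (x i) \<le> nrm av x"
  unfolding nrm_def by (rule Max_ge) auto
lemma nrm_le_iff: "nrm av x \<le> r \<longleftrightarrow> (\<forall>i. av (x i) \<le> r)"
  unfolding nrm_def by (subst Max_le_iff) auto
lemma nrm_attained: "\<exists>i. nrm av x = av (x i)"
proof -
  have "Max (range (\<lambda>i. av (x i))) \<in> range (\<lambda>i. av (x i))" by (rule Max_in) auto
  then show ?thesis unfolding nrm_def by (metis rangeE)
qed
lemma nrm_nonneg[simp]: "nrm av x \<ge> 0"
  using nrm_ge_component[of x undefined] av_nonneg order.trans by blast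
lemma nrm0[simp]: "nrm av 0 = 0"
  using nrm_attained[of 0] by auto
lemma nrm_eq_0[simp]: "nrm av x = 0 \<longleftrightarrow> x = 0"
proof
  assume "nrm av x = 0"
  then have "\<forall>i. av (x i) \<le> 0" using nrm_le_iff[of x 0] by simp
  then have "\<forall>i. x i = 0" by (meson antisym av_eq_0 av_nonneg)
  then show "x = 0" by auto
qed simp
lemma nrm_pos: "x \<noteq> 0 \<Longrightarrow> nrm av x > 0"
  using nrm_eq_0 nrm_nonneg by (metis less_eq_real_def)
lemma nrm_ultra: "nrm av (x + y) \<le> max (nrm av x) (nrm av y)"
  unfolding nrm_le_iff
proof
  fix i
  have "av ((x + y) i) \<le> max (av (x i)) (av (y i))" using av_ultra by simp
  also have "\<dots> \<le> max (nrm av x) (nrm av y)" using nrm_ge_component max.mono by metis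
  finally show "av ((x + y) i) \<le> max (nrm av x) (nrm av y)" .
qed
lemma nrm_uminus[simp]: "nrm av (- x) = nrm av x"
  unfolding nrm_def by simp
lemma nrm_commute: "nrm av (x - y) = nrm av (y - x)"
  by (metis minus_diff_eq nrm_uminus)
lemma nrm_triangle: "nrm av (x - z) \<le> max (nrm av (x - y)) (nrm av (y - z))"
  using nrm_ultra[of "x - y" "y - z"] by simp
lemma nrm_smul: "nrm av (smul c x) = av c * nrm av x"
proof -
  obtain i where i: "nrm av (smul c x) = av (c * x i)" using nrm_attained[of "smul c x"] by (auto simp: smul_def)
  obtain j where j: "nrm av x = av (x j)" using nrm_attained by blast
  have "av (c * x i) \<le> av c * nrm av x" using nrm_ge_component[of x i] by (simp add: av_mult mult_left_mono)
  moreover have "av c * av (x j) \<le> nrm av (smul c x)" using nrm_ge_component[of "smul c x" j] by (simp add: smul_def av_mult)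
  ultimately show ?thesis using i j by simp
qed
lemma nrm_add_dominant: "nrm av y < nrm av x \<Longrightarrow> nrm av (x + y) = nrm av x"
proof -
  assume a: "nrm av y < nrm av x"
  have "nrm av (x + y) \<le> nrm av x" using nrm_ultra[of x y] a by simp
  moreover have "nrm av x \<le> max (nrm av (x + y)) (nrm av y)" using nrm_ultra[of "x + y" "-y"] by simp
  ultimately show ?thesis using a by linarith
qed
lemma nrm_eq_if_close: "nrm av (y - x) < nrm av x \<Longrightarrow> nrm av y = nrm av x"
  using nrm_add_dominant[of "y - x" x] by simp

lemma av_dotp_le: "av (dotp x y) \<le> nrm av x * nrm av y"
  unfolding dotp_def
  by (rule av_sum_le) (auto simp: av_mult intro!: mult_mono nrm_ge_component)
lemma dotp_add_left: "dotp (x + y) z = dotp x z + dotp y z"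
  unfolding dotp_def by (simp add: distrib_right sum.distrib)
lemma dotp_add_right: "dotp z (x + y) = dotp z x + dotp z y"
  unfolding dotp_def by (simp add: distrib_left sum.distrib)
lemma dotp_comm: "dotp x y = dotp y x"
  unfolding dotp_def by (simp add: mult.commute)
lemma dotp_smul_left: "dotp (smul c x) y = c * dotp x y"
  unfolding dotp_def smul_def by (simp add: sum_distrib_left mult.assoc)
lemma dotp_smul_right: "dotp x (smul c y) = c * dotp x y"
  unfolding dotp_def smul_def by (simp add: sum_distrib_left mult.left_commute)
lemma dotp_zero_left[simp]: "dotp 0 y = 0" unfolding dotp_def by simp
lemma dotp_zero_right[simp]: "dotp x 0 = 0" unfolding dotp_def by simp

lemma smul_smul: "smul (a::'a) (smul b x) = smul (a * b) x" unfolding smul_def by (simp add: mult.assoc fun_eq_iff)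
lemma smul_one[simp]: "smul (1::'a) x = x" unfolding smul_def by (simp add: fun_eq_iff)
lemma smul_zero[simp]: "smul (c::'a) 0 = 0" unfolding smul_def by (auto simp: fun_eq_iff)
lemma smul_diff: "smul (c::'a) x - smul c y = smul c (x - y)" unfolding smul_def by (auto simp: right_diff_distrib fun_eq_iff)
lemma smul_add: "smul (c::'a) x + smul c y = smul c (x + y)" unfolding smul_def by (auto simp: distrib_left fun_eq_iff)
lemma smul_uminus: "smul (c::'a) (- x) = - smul c x" unfolding smul_def by (auto simp: fun_eq_iff)
lemma smul_inverse_smul: "(c::'a) \<noteq> 0 \<Longrightarrow> smul (inverse c) (smul c x) = x" unfolding smul_def by (auto simp: fun_eq_iff)
lemma smul_smul_inverse: "(c::'a) \<noteq> 0 \<Longrightarrow> smul c (smul (inverse c) x) = x" unfolding smul_def by (auto simp: fun_eq_iff)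

definition wave :: "('n \<Rightarrow> 'a) \<Rightarrow> ('n \<Rightarrow> 'a) \<Rightarrow> complex" where
  "wave \<eta> x = \<chi> (- dotp x \<eta>)"

lemma wave_add_freq: "wave (\<eta> + \<theta>) x = wave \<eta> x * wave \<theta> x"
  unfolding wave_def dotp_add_right by (simp add: chi_add[symmetric] add.commute)
lemma wave_add: "wave \<eta> (x + y) = wave \<eta> x * wave \<eta> y"
  unfolding wave_def dotp_add_left by (simp add: chi_add[symmetric] add.commute)
lemma wave_diff: "wave \<eta> (x - y) = wave \<eta> x * wave \<eta> (- y)"
  using wave_add[of \<eta> x "- y"] by simp
lemma wave_freq_0[simp]: "wave 0 x = 1" unfolding wave_def by simp
lemma wave_at_0[simp]: "wave \<eta> 0 = 1" unfolding wave_def by simp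
lemma wave_nonzero[simp]: "wave \<eta> x \<noteq> 0" unfolding wave_def by simp
lemma wave_eq_1_if_av_dotp_le: "av (dotp x \<eta>) \<le> 1 \<Longrightarrow> wave \<eta> x = 1"
  unfolding wave_def using chi_eq_1_iff by simp
lemma wave_eq_1_if_nrm_le: "nrm av x * nrm av \<eta> \<le> 1 \<Longrightarrow> wave \<eta> x = 1"
  using wave_eq_1_if_av_dotp_le av_dotp_le order.trans by blast
lemma wave_swap: "wave \<eta> x = wave x \<eta>" unfolding wave_def by (simp add: dotp_comm)

text \<open>Radii are indexed by exponents: ball a k has radius |w|^k, so balls shrink as k grows. Any two
  balls of the same radius are equal or disjoint, and closed balls are open.\<close>

definition ball :: "('n \<Rightarrow> 'a) \<Rightarrow> int \<Rightarrow> ('n \<Rightarrow> 'a) set" where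
  "ball a k = {x. nrm av (x - a) \<le> rad k}"

abbreviation ind :: "('n \<Rightarrow> 'a) set \<Rightarrow> ('n \<Rightarrow> 'a) \<Rightarrow> complex" where
  "ind S \<equiv> indicator S"

lemma mem_ball: "x \<in> ball a k \<longleftrightarrow> nrm av (x - a) \<le> rad k" unfolding ball_def by simp
lemma ball_center[simp]: "a \<in> ball a k" unfolding ball_def by simp
lemma ball_sym: "x \<in> ball a k \<longleftrightarrow> a \<in> ball x k" unfolding ball_def by (simp add: nrm_commute)
lemma ball_subset: "b \<in> ball a k \<Longrightarrow> k \<le> k' \<Longrightarrow> ball b k' \<subseteq> ball a k"
proof
  fix x assume b: "b \<in> ball a k" and kk: "k \<le> k'" and x: "x \<in> ball b k'"
  have "nrm av (x - a) \<le> max (nrm av (x - b)) (nrm av (b - a))" by (rule nrm_triangle)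
  also have "\<dots> \<le> rad k" using b x rad_mono[OF kk] by (auto simp: mem_ball)
  finally show "x \<in> ball a k" by (simp add: mem_ball)
qed
lemma ball_antimono: "k \<le> k' \<Longrightarrow> ball a k' \<subseteq> ball a k"
  using ball_subset[of a a k k'] by simp
lemma ball_eq: "b \<in> ball a k \<Longrightarrow> ball b k = ball a k"
  using ball_subset ball_sym by (metis order.refl subset_antisym)
lemma ball_disj: "x \<in> ball a k \<Longrightarrow> x \<in> ball b k \<Longrightarrow> ball a k = ball b k"
  by (metis ball_eq ball_sym)
lemma ball_trans: "x \<in> ball a k \<Longrightarrow> a \<in> ball b k \<Longrightarrow> x \<in> ball b k"
  using ball_eq by blast
lemma ball_mem_iff: "y \<in> ball x k \<Longrightarrow> y \<in> ball a k \<longleftrightarrow> x \<in> ball a k"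
  by (meson ball_sym ball_trans)
lemma ball_uminus: "- x \<in> ball (- a) k \<longleftrightarrow> x \<in> ball a k"
  unfolding mem_ball by (metis minus_diff_minus nrm_uminus)
lemma ball_translate: "x + c \<in> ball (a + c) k \<longleftrightarrow> x \<in> ball a k"
  unfolding mem_ball by simp
lemma ball_smul: "av c = rad j \<Longrightarrow> smul c x \<in> ball (smul c a) (k + j) \<longleftrightarrow> x \<in> ball a k"
  unfolding mem_ball smul_diff nrm_smul rad_add by (simp add: mult.commute)
lemma nrm_ball: "x \<in> ball a k \<Longrightarrow> rad k < nrm av a \<Longrightarrow> nrm av x = nrm av a"
  unfolding mem_ball using nrm_eq_if_close by force
lemma nrm_ball_le: "x \<in> ball a k \<Longrightarrow> nrm av x \<le> max (nrm av a) (rad k)"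
  unfolding mem_ball using nrm_ultra[of "x - a" a] by (simp add: max_def split: if_splits)
lemma mem_ball_0: "x \<in> ball 0 k \<longleftrightarrow> nrm av x \<le> rad k" unfolding mem_ball by simp

lemma openF_ball: "openF av (ball a k)"
  unfolding openF_def
proof
  fix x assume x: "x \<in> ball a k"
  show "\<exists>r>0. \<forall>y. nrm av (y - x) < r \<longrightarrow> y \<in> ball a k"
    using x ball_trans[of _ x k a] by (intro exI[of _ "rad k"]) (auto simp: mem_ball)
qed

lemma open_has_ball: "openF av U \<Longrightarrow> x \<in> U \<Longrightarrow> \<exists>k. ball x k \<subseteq> U"
proof -
  assume U: "openF av U" and x: "x \<in> U"
  then obtain r where r: "r > 0" "\<forall>y. nrm av (y - x) < r \<longrightarrow> y \<in> U" unfolding openF_def by blast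
  obtain k where "rad k < r" using rad_small r(1) by blast
  then show ?thesis using r(2) by (intro exI[of _ k]) (auto simp: mem_ball)
qed

lemma open_has_ball_ge: "openF av U \<Longrightarrow> x \<in> U \<Longrightarrow> \<exists>k\<ge>k0. ball x k \<subseteq> U"
  using open_has_ball ball_antimono by (metis max.cobounded2 max.cobounded1 order.trans)

lemma closureF_ball: "closureF av (ball a k) = ball a k"
proof
  show "closureF av (ball a k) \<subseteq> ball a k"
  proof
    fix x assume "x \<in> closureF av (ball a k)"
    then obtain y where "y \<in> ball a k" "nrm av (y - x) < rad k" unfolding closureF_def by force
    then show "x \<in> ball a k" by (metis ball_sym ball_trans less_eq_real_def mem_ball)
  qed
  show "ball a k \<subseteq> closureF av (ball a k)" unfolding closureF_def by force
qed

lemma closureF_sub: "A \<subseteq> closureF av A" unfolding closureF_def by force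
lemma closureF_mono: "A \<subseteq> B \<Longrightarrow> closureF av A \<subseteq> closureF av B" unfolding closureF_def by blast

lemma supp_ind_ball: "closureF av {x. ind (ball a k) x \<noteq> 0} = ball a k"
  unfolding indicator_def using closureF_ball by simp

section \<open>Test functions\<close>

definition locally_const :: "(('n \<Rightarrow> 'a) \<Rightarrow> 'b) \<Rightarrow> bool" where
  "locally_const f \<longleftrightarrow> (\<forall>x. \<exists>r>0. \<forall>y. nrm av (y - x) < r \<longrightarrow> f y = f x)"

definition bounded_supp :: "(('n \<Rightarrow> 'a) \<Rightarrow> complex) \<Rightarrow> bool" where
  "bounded_supp f \<longleftrightarrow> (\<exists>C. \<forall>x. f x \<noteq> 0 \<longrightarrow> nrm av x \<le> C)"

lemma locally_const_ball: "locally_const f \<longleftrightarrow> (\<forall>x. \<exists>k. \<forall>y\<in>ball x k. f y = f x)"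
proof
  assume a: "locally_const f"
  show "\<forall>x. \<exists>k. \<forall>y\<in>ball x k. f y = f x"
  proof
    fix x
    obtain r where r: "r > 0" "\<And>y. nrm av (y - x) < r \<Longrightarrow> f y = f x"
      using a unfolding locally_const_def by meson
    obtain k where k: "rad k < r" using rad_small r(1) by blast
    have "\<forall>y\<in>ball x k. f y = f x"
    proof
      fix y assume "y \<in> ball x k"
      then have "nrm av (y - x) < r" using k unfolding mem_ball by linarith
      then show "f y = f x" by (rule r(2))
    qed
    then show "\<exists>k. \<forall>y\<in>ball x k. f y = f x" by blast
  qed
next
  assume a: "\<forall>x. \<exists>k. \<forall>y\<in>ball x k. f y = f x"
  show "locally_const f" unfolding locally_const_def
  proof
    fix x
    obtain k where k: "\<And>y. y \<in> ball x k \<Longrightarrow> f y = f x" using a by meson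
    have "\<forall>y. nrm av (y - x) < rad k \<longrightarrow> f y = f x"
      using k unfolding mem_ball by (meson less_imp_le)
    then show "\<exists>r>0. \<forall>y. nrm av (y - x) < r \<longrightarrow> f y = f x" using rad_pos by blast
  qed
qed

lemma locally_constD: assumes "locally_const f" shows "\<exists>k. \<forall>y\<in>ball x k. f y = f x"
  using assms unfolding locally_const_ball by blast

lemma locally_const_const[simp]: "locally_const (\<lambda>x. c)"
  unfolding locally_const_ball by blast
lemma locally_const_binop: assumes f: "locally_const f" and g: "locally_const g" shows "locally_const (\<lambda>x. h (f x) (g x))"
  unfolding locally_const_ball
proof
  fix x
  obtain k1 where k1: "\<forall>y\<in>ball x k1. f y = f x" using locally_constD[OF f] by blast
  obtain k2 where k2: "\<forall>y\<in>ball x k2. g y = g x" using locally_constD[OF g] by blast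
  have s1: "ball x (max k1 k2) \<subseteq> ball x k1" by (rule ball_antimono) simp
  have s2: "ball x (max k1 k2) \<subseteq> ball x k2" by (rule ball_antimono) simp
  have "\<forall>y\<in>ball x (max k1 k2). h (f y) (g y) = h (f x) (g x)"
  proof
    fix y assume "y \<in> ball x (max k1 k2)"
    then have "f y = f x" "g y = g x" using k1 k2 s1 s2 by blast+
    then show "h (f y) (g y) = h (f x) (g x)" by simp
  qed
  then show "\<exists>k. \<forall>y\<in>ball x k. h (f y) (g y) = h (f x) (g x)" by blast
qed
lemma locally_const_mult: "locally_const f \<Longrightarrow> locally_const g \<Longrightarrow> locally_const (\<lambda>x. f x * g x)" by (rule locally_const_binop[of f g "(*)"])
lemma locally_const_add: "locally_const f \<Longrightarrow> locally_const g \<Longrightarrow> locally_const (\<lambda>x. f x + g x)" by (rule locally_const_binop[of f g "(+)"])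
lemma locally_const_ind_ball: "locally_const (ind (ball a k))"
  unfolding locally_const_ball
proof (intro allI exI[of _ k] ballI)
  fix x y assume "y \<in> ball x k"
  then show "ind (ball a k) y = ind (ball a k) x" by (simp add: indicator_def ball_mem_iff[of y x k a])
qed
lemma locally_const_wave: "locally_const (wave \<eta>)"
  unfolding locally_const_ball
proof
  fix x
  obtain k where k: "rad k * nrm av \<eta> \<le> 1"
  proof (cases "\<eta> = 0")
    case True then show ?thesis using that[of 0] by simp
  next
    case False
    then have "nrm av \<eta> > 0" by (rule nrm_pos)
    then obtain k where "rad k < inverse (nrm av \<eta>)" using rad_small by (meson positive_imp_inverse_positive)
    then have "rad k * nrm av \<eta> \<le> 1" using \<open>nrm av \<eta> > 0\<close> by (simp add: field_simps)
    then show ?thesis using that by blast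
  qed
  show "\<exists>k. \<forall>y\<in>ball x k. wave \<eta> y = wave \<eta> x"
  proof (intro exI[of _ k] ballI)
    fix y assume "y \<in> ball x k"
    then have "nrm av (y - x) * nrm av \<eta> \<le> 1" using k unfolding mem_ball
      by (meson mult_right_mono nrm_nonneg order.trans)
    then have "wave \<eta> (y - x) = 1" by (rule wave_eq_1_if_nrm_le)
    then show "wave \<eta> y = wave \<eta> x" using wave_add[of \<eta> x "y - x"] by simp
  qed
qed

lemma bounded_supp_ball: "bounded_supp f \<longleftrightarrow> (\<exists>K. \<forall>x. f x \<noteq> 0 \<longrightarrow> x \<in> ball 0 K)"
proof
  assume "bounded_supp f"
  then obtain C where C: "\<And>x. f x \<noteq> 0 \<Longrightarrow> nrm av x \<le> C" unfolding bounded_supp_def by blast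
  obtain K where K: "rad K > C" using rad_big by blast
  have "\<forall>x. f x \<noteq> 0 \<longrightarrow> x \<in> ball 0 K"
  proof (intro allI impI)
    fix x assume "f x \<noteq> 0"
    then have "nrm av x \<le> rad K" using C K by (meson less_imp_le order.trans)
    then show "x \<in> ball 0 K" unfolding mem_ball_0 .
  qed
  then show "\<exists>K. \<forall>x. f x \<noteq> 0 \<longrightarrow> x \<in> ball 0 K" by blast
next
  assume "\<exists>K. \<forall>x. f x \<noteq> 0 \<longrightarrow> x \<in> ball 0 K"
  then obtain K where K: "\<And>x. f x \<noteq> 0 \<Longrightarrow> x \<in> ball 0 K" by blast
  have "\<forall>x. f x \<noteq> 0 \<longrightarrow> nrm av x \<le> rad K" using K unfolding mem_ball_0 by blast
  then show "bounded_supp f" unfolding bounded_supp_def by blast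
qed

lemma bounded_supp_closure: "boundedF av (closureF av {x. f x \<noteq> 0}) \<longleftrightarrow> bounded_supp f"
proof
  assume "boundedF av (closureF av {x. f x \<noteq> 0})"
  then obtain C where C: "\<And>x. x \<in> closureF av {x. f x \<noteq> 0} \<Longrightarrow> nrm av x \<le> C"
    unfolding boundedF_def by blast
  have "\<forall>x. f x \<noteq> 0 \<longrightarrow> nrm av x \<le> C"
    using C closureF_sub[of "{x. f x \<noteq> 0}"] by blast
  then show "bounded_supp f" unfolding bounded_supp_def by blast
next
  assume "bounded_supp f"
  then obtain K where K: "\<And>x. f x \<noteq> 0 \<Longrightarrow> x \<in> ball 0 K" unfolding bounded_supp_ball by blast
  then have "{x. f x \<noteq> 0} \<subseteq> ball 0 K" by blast
  then have "closureF av {x. f x \<noteq> 0} \<subseteq> closureF av (ball 0 K)" by (rule closureF_mono)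
  then have "closureF av {x. f x \<noteq> 0} \<subseteq> ball 0 K" unfolding closureF_ball .
  have "\<forall>x\<in>closureF av {x. f x \<noteq> 0}. nrm av x \<le> rad K"
  proof
    fix x assume "x \<in> closureF av {x. f x \<noteq> 0}"
    then have "x \<in> ball 0 K" using \<open>closureF av {x. f x \<noteq> 0} \<subseteq> ball 0 K\<close> by (rule subsetD[rotated])
    then show "nrm av x \<le> rad K" by (simp only: mem_ball_0)
  qed
  then show "boundedF av (closureF av {x. f x \<noteq> 0})" unfolding boundedF_def by blast
qed

abbreviation \<S> :: "(('n \<Rightarrow> 'a) \<Rightarrow> complex) set" where "\<S> \<equiv> SF av"

lemma SF_iff: "f \<in> \<S> \<longleftrightarrow> locally_const f \<and> bounded_supp f"
proof -
  have "f \<in> \<S> \<longleftrightarrow> locally_const f \<and> boundedF av (closureF av {x. f x \<noteq> 0})"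
    unfolding SF_def locally_const_def by simp
  then show ?thesis unfolding bounded_supp_closure .
qed

lemma SF_locally_const: "f \<in> \<S> \<Longrightarrow> locally_const f" unfolding SF_iff by blast
lemma SF_bounded_supp: "f \<in> \<S> \<Longrightarrow> bounded_supp f" unfolding SF_iff by blast

lemma bounded_supp_mult_left: "bounded_supp f \<Longrightarrow> bounded_supp (\<lambda>x. f x * g x)" unfolding bounded_supp_def by auto
lemma bounded_supp_mult_right: "bounded_supp g \<Longrightarrow> bounded_supp (\<lambda>x. f x * g x)" unfolding bounded_supp_def by auto
lemma bounded_supp_add: assumes "bounded_supp f" "bounded_supp g" shows "bounded_supp (\<lambda>x. f x + g x)"
proof -
  obtain C1 where C1: "\<And>x. f x \<noteq> 0 \<Longrightarrow> nrm av x \<le> C1" using assms(1) unfolding bounded_supp_def by blast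
  obtain C2 where C2: "\<And>x. g x \<noteq> 0 \<Longrightarrow> nrm av x \<le> C2" using assms(2) unfolding bounded_supp_def by blast
  have "\<forall>x. f x + g x \<noteq> 0 \<longrightarrow> nrm av x \<le> max C1 C2"
  proof (intro allI impI)
    fix x assume "f x + g x \<noteq> 0"
    then have "f x \<noteq> 0 \<or> g x \<noteq> 0" by auto
    then show "nrm av x \<le> max C1 C2" using C1 C2 by (meson max.coboundedI1 max.coboundedI2)
  qed
  then show ?thesis unfolding bounded_supp_def by blast
qed
lemma bounded_supp_ind_ball: "bounded_supp (ind (ball a k))"
  unfolding bounded_supp_def indicator_def using nrm_ball_le by (auto intro!: exI[of _ "max (nrm av a) (rad k)"])
lemma bounded_supp_zero: "bounded_supp (\<lambda>x. 0)" unfolding bounded_supp_def by simp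

lemma SF_mult: "f \<in> \<S> \<Longrightarrow> locally_const g \<Longrightarrow> (\<lambda>x. f x * g x) \<in> \<S>"
  by (simp add: SF_iff locally_const_mult bounded_supp_mult_left)
lemma SF_mult_left: "g \<in> \<S> \<Longrightarrow> locally_const f \<Longrightarrow> (\<lambda>x. f x * g x) \<in> \<S>"
  by (simp add: SF_iff locally_const_mult bounded_supp_mult_right)
lemma SF_add: "f \<in> \<S> \<Longrightarrow> g \<in> \<S> \<Longrightarrow> (\<lambda>x. f x + g x) \<in> \<S>"
  by (simp add: SF_iff locally_const_add bounded_supp_add)
lemma SF_cmult: "f \<in> \<S> \<Longrightarrow> (\<lambda>x. c * f x) \<in> \<S>"
  using SF_mult_left[of f "\<lambda>x. c"] by simp
lemma SF_zero: "(\<lambda>x. 0) \<in> \<S>" by (simp add: SF_iff bounded_supp_zero)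
lemma SF_sum: "finite A \<Longrightarrow> (\<And>a. a \<in> A \<Longrightarrow> f a \<in> \<S>) \<Longrightarrow> (\<lambda>x. \<Sum>a\<in>A. f a x) \<in> \<S>"
  by (induction A rule: finite_induct) (auto intro: SF_add SF_zero)
lemma SF_ind_ball: "ind (ball a k) \<in> \<S>"
  by (simp add: SF_iff locally_const_ind_ball bounded_supp_ind_ball)

definition packet :: "('n \<Rightarrow> 'a) \<Rightarrow> int \<Rightarrow> ('n \<Rightarrow> 'a) \<Rightarrow> ('n \<Rightarrow> 'a) \<Rightarrow> complex" where
  "packet a k \<eta> = (\<lambda>x. ind (ball a k) x * wave \<eta> x)"

lemma SF_packet: "packet a k \<eta> \<in> \<S>"
  unfolding packet_def by (rule SF_mult[OF SF_ind_ball locally_const_wave])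

lemma packet_freq_0: "packet a k 0 = ind (ball a k)" unfolding packet_def by simp

lemma I_add: "f \<in> \<S> \<Longrightarrow> g \<in> \<S> \<Longrightarrow> I (\<lambda>x. f x + g x) = I f + I g"
  using haar unfolding self_dual_haar_def by blast
lemma I_cmult: "f \<in> \<S> \<Longrightarrow> I (\<lambda>x. c * f x) = c * I f"
  using haar unfolding self_dual_haar_def by blast
lemma I_translate: "f \<in> \<S> \<Longrightarrow> I (\<lambda>x. f (x + a)) = I f"
  using haar unfolding self_dual_haar_def by blast
lemma FT_FT_apply: "f \<in> \<S> \<Longrightarrow> FT I \<chi> (FT I \<chi> f) x = f (- x)"
  using haar unfolding self_dual_haar_def by blast

abbreviation distr :: "((('n \<Rightarrow> 'a) \<Rightarrow> complex) \<Rightarrow> complex) \<Rightarrow> bool" where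
  "distr \<equiv> distribution av"

lemma distr_I: "distr I"
  unfolding distribution_def by (simp add: I_add I_cmult)

lemma distr_add: "distr v \<Longrightarrow> f \<in> \<S> \<Longrightarrow> g \<in> \<S> \<Longrightarrow> v (\<lambda>x. f x + g x) = v f + v g"
  unfolding distribution_def by blast
lemma distr_cmult: "distr v \<Longrightarrow> f \<in> \<S> \<Longrightarrow> v (\<lambda>x. c * f x) = c * v f"
  unfolding distribution_def by blast
lemma distr_zero: "distr v \<Longrightarrow> v (\<lambda>x. 0) = 0"
  using distr_cmult[of v "\<lambda>x. 0" 0] SF_zero by simp
lemma distr_sum: assumes d: "distr v" shows "finite A \<Longrightarrow> (\<And>a. a \<in> A \<Longrightarrow> f a \<in> \<S>) \<Longrightarrow>
   v (\<lambda>x. \<Sum>a\<in>A. f a x) = (\<Sum>a\<in>A. v (f a))"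
proof (induction A rule: finite_induct)
  case empty then show ?case using distr_zero[OF d] by simp
next
  case (insert a A)
  have "v (\<lambda>x. \<Sum>b\<in>insert a A. f b x) = v (\<lambda>x. f a x + (\<Sum>b\<in>A. f b x))"
    using insert by simp
  also have "\<dots> = v (f a) + v (\<lambda>x. \<Sum>b\<in>A. f b x)"
    using insert distr_add[OF d, of "f a" "\<lambda>x. \<Sum>b\<in>A. f b x"] SF_sum[of A f] by simp
  finally show ?case using insert by simp
qed
lemma distr_eq_zero: "distr v \<Longrightarrow> (\<forall>x. f x = 0) \<Longrightarrow> v f = 0"
proof -
  assume "distr v" "\<forall>x. f x = 0"
  then have "f = (\<lambda>x. 0)" by auto
  then show ?thesis using distr_zero \<open>distr v\<close> by simp
qed
lemma distr_diff: "distr v \<Longrightarrow> f \<in> \<S> \<Longrightarrow> g \<in> \<S> \<Longrightarrow> v (\<lambda>x. f x - g x) = v f - v g"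
proof -
  assume d: "distr v" and f: "f \<in> \<S>" and g: "g \<in> \<S>"
  have "v (\<lambda>x. f x + (-1) * g x) = v f + v (\<lambda>x. (-1) * g x)"
    by (rule distr_add[OF d f SF_cmult[OF g]])
  also have "v (\<lambda>x. (-1) * g x) = (-1) * v g" by (rule distr_cmult[OF d g])
  finally have "v (\<lambda>x. f x + (-1) * g x) = v f - v g" by simp
  moreover have "(\<lambda>x. f x + (-1) * g x) = (\<lambda>x. f x - g x)" by simp
  ultimately show ?thesis by simp
qed

section \<open>Expansion in indicators of balls\<close>

text \<open>Representatives of the residue field, then of the unit ball modulo w^m, written in
  base w with these digits, and finally of a ball of radius |w|^K modulo balls of radius |w|^M.\<close>

definition residue_reps :: "'a set" where
  "residue_reps = (SOME R. finite R \<and> R \<subseteq> {x. av x \<le> 1} \<and> (\<forall>x. av x \<le> 1 \<longrightarrow> (\<exists>!r. r \<in> R \<and> av (x - r) < 1)))"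

lemma residue_reps: "finite residue_reps" "residue_reps \<subseteq> {x. av x \<le> 1}" "\<And>x. av x \<le> 1 \<Longrightarrow> \<exists>!r. r \<in> residue_reps \<and> av (x - r) < 1"
proof -
  have "finite residue_reps \<and> residue_reps \<subseteq> {x. av x \<le> 1} \<and> (\<forall>x. av x \<le> 1 \<longrightarrow> (\<exists>!r. r \<in> residue_reps \<and> av (x - r) < 1))"
    unfolding residue_reps_def using residue_field by (rule someI_ex)
  then show "finite residue_reps" "residue_reps \<subseteq> {x. av x \<le> 1}" "\<And>x. av x \<le> 1 \<Longrightarrow> \<exists>!r. r \<in> residue_reps \<and> av (x - r) < 1"
    by blast+
qed

lemma residue_reps_sep: "r \<in> residue_reps \<Longrightarrow> r' \<in> residue_reps \<Longrightarrow> r \<noteq> r' \<Longrightarrow> av (r - r') \<ge> 1"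
proof (rule ccontr)
  assume r: "r \<in> residue_reps" "r' \<in> residue_reps" "r \<noteq> r'" "\<not> av (r - r') \<ge> 1"
  have "av r \<le> 1" using r(1) residue_reps(2) by blast
  then have "\<exists>!s. s \<in> residue_reps \<and> av (r - s) < 1" by (rule residue_reps(3))
  moreover have "av (r - r) < 1" by simp
  moreover have "av (r - r') < 1" using r(4) by simp
  ultimately show False using r by blast
qed

lemma av_less_rad_imp_le: "av z < rad k \<Longrightarrow> av z \<le> rad (k + 1)"
proof (cases "z = 0")
  case False
  assume a: "av z < rad k"
  obtain j where j: "av z = rad j" using av_eq_rad[OF False] by blast
  then have "k < j" using a rad_less_iff by simp
  then have "k + 1 \<le> j" by simp
  then show ?thesis using j rad_mono by simp
qed simp

lemma av_unif_power: "av (w ^ m) = rad (int m)"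
  using av_unif_powi[of "int m"] by simp

fun unit_reps :: "nat \<Rightarrow> 'a set" where
  "unit_reps 0 = {0}"
| "unit_reps (Suc m) = (\<lambda>(t, r). t + w ^ m * r) ` (unit_reps m \<times> residue_reps)"

lemma unit_reps_finite: "finite (unit_reps m)"
  by (induction m) (auto simp: residue_reps(1))

lemma av_unit_reps_le_1: "t \<in> unit_reps m \<Longrightarrow> av t \<le> 1"
proof (induction m arbitrary: t)
  case (Suc m)
  then obtain t0 r where tr: "t = t0 + w ^ m * r" "t0 \<in> unit_reps m" "r \<in> residue_reps" by auto
  have "av t0 \<le> 1" using Suc tr by blast
  moreover have "av r \<le> 1" using tr(3) residue_reps(2) by blast
  moreover have "av (w ^ m) \<le> 1" using av_unif_power rad_mono[of 0 "int m"] by simp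
  ultimately have "av (w ^ m * r) \<le> 1" by (simp add: av_mult mult_le_one)
  then show ?case using tr(1) av_ultra[of t0 "w ^ m * r"] \<open>av t0 \<le> 1\<close> by simp
qed simp

lemma unit_reps_cover: "av x \<le> 1 \<Longrightarrow> \<exists>t\<in>unit_reps m. av (x - t) \<le> rad (int m)"
proof (induction m)
  case 0 then show ?case by simp
next
  case (Suc m)
  then obtain t where t: "t \<in> unit_reps m" "av (x - t) \<le> rad (int m)" by blast
  define y where "y = (x - t) / w ^ m"
  have wm: "w ^ m \<noteq> 0" by simp
  have xy: "x - t = w ^ m * y" unfolding y_def using wm by simp
  have "av y = av (x - t) / rad (int m)" unfolding y_def av_divide av_unif_power ..
  then have "av y \<le> 1" using t(2) by (simp add: divide_le_eq_1)
  then obtain r where r: "r \<in> residue_reps" "av (y - r) < 1" using residue_reps(3) by blast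
  have "av (y - r) \<le> rad 1" using av_less_rad_imp_le[of "y - r" 0] r(2) by simp
  have "x - (t + w ^ m * r) = w ^ m * (y - r)" using xy by (simp add: algebra_simps)
  then have "av (x - (t + w ^ m * r)) = rad (int m) * av (y - r)" by (simp add: av_mult av_unif_power)
  also have "\<dots> \<le> rad (int m) * rad 1" using \<open>av (y - r) \<le> rad 1\<close> by (simp add: mult_left_mono)
  also have "\<dots> = rad (int (Suc m))" by (simp add: rad_add[symmetric] add.commute)
  finally have "av (x - (t + w ^ m * r)) \<le> rad (int (Suc m))" .
  moreover have "t + w ^ m * r \<in> unit_reps (Suc m)" using t(1) r(1) by force
  ultimately show ?case by blast
qed

lemma unit_reps_sep: "t \<in> unit_reps m \<Longrightarrow> t' \<in> unit_reps m \<Longrightarrow> t \<noteq> t' \<Longrightarrow> av (t - t') > rad (int m)"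
proof (induction m arbitrary: t t')
  case 0 then show ?case by simp
next
  case (Suc m)
  obtain t1 r1 where 1: "t = t1 + w ^ m * r1" "t1 \<in> unit_reps m" "r1 \<in> residue_reps" using Suc.prems(1) by auto
  obtain t2 r2 where 2: "t' = t2 + w ^ m * r2" "t2 \<in> unit_reps m" "r2 \<in> residue_reps" using Suc.prems(2) by auto
  have d: "t - t' = (t1 - t2) + w ^ m * (r1 - r2)" using 1 2 by (simp add: algebra_simps)
  have rs: "rad (int (Suc m)) < rad (int m)" by (simp add: rad_less_iff)
  show ?case
  proof (cases "t1 = t2")
    case False
    then have a1: "av (t1 - t2) > rad (int m)" using Suc.IH 1 2 by blast
    have "av r1 \<le> 1" "av r2 \<le> 1" using 1(3) 2(3) residue_reps(2) by blast+
    then have "av (r1 - r2) \<le> 1" using av_diff[of r1 r2] by simp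
    then have "av (w ^ m * (r1 - r2)) \<le> rad (int m)" by (simp add: av_mult av_unif_power mult_left_le)
    then have "av (t - t') = av (t1 - t2)" unfolding d using a1 by (intro av_add_dominant) simp
    then show ?thesis using a1 rs by simp
  next
    case True
    then have "r1 \<noteq> r2" using Suc.prems(3) 1 2 by auto
    then have "av (r1 - r2) \<ge> 1" using residue_reps_sep 1(3) 2(3) by blast
    then have "rad (int m) * 1 \<le> rad (int m) * av (r1 - r2)" by (intro mult_left_mono) auto
    then have "av (t - t') \<ge> rad (int m)" unfolding d True by (simp add: av_mult av_unif_power)
    then show ?thesis using rs by simp
  qed
qed

definition ball_reps :: "int \<Rightarrow> int \<Rightarrow> 'a set" where
  "ball_reps K M = (\<lambda>t. w powi K * t) ` unit_reps (nat (M - K))"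

lemma ball_reps_finite: "finite (ball_reps K M)" unfolding ball_reps_def using unit_reps_finite by simp

lemma av_ball_reps_le: "s \<in> ball_reps K M \<Longrightarrow> av s \<le> rad K"
  unfolding ball_reps_def using av_unit_reps_le_1 by (auto simp: av_mult av_unif_powi mult_left_le)

lemma ball_reps_cover: assumes "K \<le> M" "av x \<le> rad K" shows "\<exists>s\<in>ball_reps K M. av (x - s) \<le> rad M"
proof -
  define y where "y = x / w powi K"
  have wk: "w powi K \<noteq> 0" by simp
  have xy: "x = w powi K * y" unfolding y_def using wk by simp
  have "av y \<le> 1" unfolding y_def av_divide av_unif_powi using assms(2) by (simp add: divide_le_eq_1)
  then obtain t where t: "t \<in> unit_reps (nat (M - K))" "av (y - t) \<le> rad (int (nat (M - K)))" using unit_reps_cover by blast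
  have "int (nat (M - K)) = M - K" using assms(1) by simp
  then have t2: "av (y - t) \<le> rad (M - K)" using t(2) by simp
  have "x - w powi K * t = w powi K * (y - t)" using xy by (simp add: algebra_simps)
  then have "av (x - w powi K * t) = rad K * av (y - t)" by (simp add: av_mult av_unif_powi)
  also have "\<dots> \<le> rad K * rad (M - K)" using t2 by (simp add: mult_left_mono)
  also have "\<dots> = rad M" by (simp add: rad_add[symmetric])
  finally show ?thesis using t(1) unfolding ball_reps_def by blast
qed

lemma ball_reps_sep: assumes "K \<le> M" "s \<in> ball_reps K M" "s' \<in> ball_reps K M" "s \<noteq> s'" shows "av (s - s') > rad M"
proof -
  obtain t where t: "s = w powi K * t" "t \<in> unit_reps (nat (M - K))" using assms(2) unfolding ball_reps_def by blast
  obtain t' where t': "s' = w powi K * t'" "t' \<in> unit_reps (nat (M - K))" using assms(3) unfolding ball_reps_def by blast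
  have "t \<noteq> t'" using assms(4) t t' by auto
  then have "av (t - t') > rad (int (nat (M - K)))" using unit_reps_sep t t' by blast
  moreover have "int (nat (M - K)) = M - K" using assms(1) by simp
  ultimately have a: "av (t - t') > rad (M - K)" by simp
  have "s - s' = w powi K * (t - t')" using t t' by (simp add: algebra_simps)
  then have "av (s - s') = rad K * av (t - t')" by (simp add: av_mult av_unif_powi)
  also have "\<dots> > rad K * rad (M - K)" using a by simp
  also have "rad K * rad (M - K) = rad M" by (simp add: rad_add[symmetric])
  finally show ?thesis .
qed

definition grid :: "('n \<Rightarrow> 'a) \<Rightarrow> int \<Rightarrow> int \<Rightarrow> ('n \<Rightarrow> 'a) set" where
  "grid c K M = (\<lambda>g. c + g) ` (PiE UNIV (\<lambda>_. ball_reps K M))"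

lemma grid_finite: "finite (grid c K M)"
  unfolding grid_def using ball_reps_finite by (intro finite_imageI finite_PiE) auto

lemma grid_subset_ball: "g \<in> grid c K M \<Longrightarrow> g \<in> ball c K"
proof -
  assume "g \<in> grid c K M"
  then obtain h where h: "g = c + h" "h \<in> PiE UNIV (\<lambda>_. ball_reps K M)" unfolding grid_def by blast
  then have "\<forall>i. av (h i) \<le> rad K" using av_ball_reps_le by (auto simp: PiE_UNIV_domain)
  then have "nrm av h \<le> rad K" by (simp add: nrm_le_iff)
  then show "g \<in> ball c K" unfolding mem_ball h(1) by simp
qed

lemma grid_cover: assumes "K \<le> M" "y \<in> ball c K" shows "\<exists>g\<in>grid c K M. y \<in> ball g M"
proof -
  have "\<forall>i. av ((y - c) i) \<le> rad K" using assms(2) unfolding mem_ball nrm_le_iff by blast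
  then have "\<forall>i. \<exists>s\<in>ball_reps K M. av ((y - c) i - s) \<le> rad M" using ball_reps_cover[OF assms(1)] by blast
  then obtain h where h: "\<forall>i. h i \<in> ball_reps K M \<and> av ((y - c) i - h i) \<le> rad M" by metis
  then have "h \<in> PiE UNIV (\<lambda>_. ball_reps K M)" by (simp add: PiE_UNIV_domain)
  then have "c + h \<in> grid c K M" unfolding grid_def by blast
  moreover have "nrm av (y - (c + h)) \<le> rad M" unfolding nrm_le_iff using h by (simp add: algebra_simps)
  ultimately show ?thesis unfolding mem_ball by blast
qed

lemma grid_sep: assumes "K \<le> M" "g \<in> grid c K M" "g' \<in> grid c K M" "g \<noteq> g'" shows "g' \<notin> ball g M"
proof -
  obtain h where h: "g = c + h" "h \<in> PiE UNIV (\<lambda>_. ball_reps K M)" using assms(2) unfolding grid_def by blast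
  obtain h' where h': "g' = c + h'" "h' \<in> PiE UNIV (\<lambda>_. ball_reps K M)" using assms(3) unfolding grid_def by blast
  have "h \<noteq> h'" using assms(4) h h' by auto
  then obtain i where i: "h i \<noteq> h' i" by auto
  have "h' i \<in> ball_reps K M" "h i \<in> ball_reps K M" using h h' by (auto simp: PiE_UNIV_domain)
  then have "av (h' i - h i) > rad M" using ball_reps_sep[OF assms(1)] i by metis
  moreover have "av ((g' - g) i) = av (h' i - h i)" using h h' by simp
  ultimately have "nrm av (g' - g) > rad M" using nrm_ge_component[of "g' - g" i] by linarith
  then show ?thesis unfolding mem_ball by simp
qed

lemma grid_unique: assumes "K \<le> M" "g \<in> grid c K M" "g' \<in> grid c K M" "y \<in> ball g M" "y \<in> ball g' M"
  shows "g = g'"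
proof (rule ccontr)
  assume "g \<noteq> g'"
  have "g' \<in> ball y M" using assms(5) ball_sym by blast
  then have "g' \<in> ball g M" using ball_trans assms(4) by blast
  then show False using grid_sep[OF assms(1-3) \<open>g \<noteq> g'\<close>] by blast
qed

definition const_on_balls :: "(('n \<Rightarrow> 'a) \<Rightarrow> 'b) \<Rightarrow> int \<Rightarrow> bool" where
  "const_on_balls f M \<longleftrightarrow> (\<forall>a. \<forall>y\<in>ball a M. f y = f a)"

lemma const_on_ballsD: "const_on_balls f M \<Longrightarrow> y \<in> ball a M \<Longrightarrow> f y = f a" unfolding const_on_balls_def by blast

lemma const_on_balls_mono: "const_on_balls f M \<Longrightarrow> M \<le> M' \<Longrightarrow> const_on_balls f M'"
  unfolding const_on_balls_def using ball_antimono by blast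

lemma ball_expansion:
  assumes KM: "K \<le> M" and u: "const_on_balls f M" and s: "\<And>y. f y \<noteq> 0 \<Longrightarrow> y \<in> ball c K"
  shows "f y = (\<Sum>g\<in>grid c K M. f g * ind (ball g M) y)"
proof (cases "y \<in> ball c K")
  case True
  obtain g0 where g0: "g0 \<in> grid c K M" "y \<in> ball g0 M" using grid_cover[OF KM True] by blast
  have "(\<Sum>g\<in>grid c K M. f g * ind (ball g M) y) = (\<Sum>g\<in>grid c K M. if g = g0 then f g0 else 0)"
  proof (rule sum.cong)
    fix g assume g: "g \<in> grid c K M"
    show "f g * ind (ball g M) y = (if g = g0 then f g0 else 0)"
    proof (cases "g = g0")
      case True then show ?thesis using g0 by (simp add: indicator_def)
    next
      case False
      then have "y \<notin> ball g M" using grid_unique[OF KM g g0(1) _ g0(2)] by blast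
      then show ?thesis using False by (simp add: indicator_def)
    qed
  qed simp
  also have "\<dots> = f g0" using g0(1) grid_finite by simp
  also have "\<dots> = f y" using const_on_ballsD[OF u g0(2)] by simp
  finally show ?thesis by simp
next
  case False
  then have fy: "f y = 0" using s by blast
  have "\<forall>g\<in>grid c K M. ind (ball g M) y = 0"
  proof
    fix g assume g: "g \<in> grid c K M"
    have "ball g M \<subseteq> ball c K" using ball_subset[OF grid_subset_ball[OF g] KM] .
    then show "ind (ball g M) y = 0" using False by (auto simp: indicator_def)
  qed
  then show ?thesis using fy by simp
qed

lemma ball_expansion_fun:
  assumes "K \<le> M" "const_on_balls f M" "\<And>y. f y \<noteq> 0 \<Longrightarrow> y \<in> ball c K"
  shows "f = (\<lambda>y. \<Sum>g\<in>grid c K M. f g * ind (ball g M) y)"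
  using ball_expansion[OF assms] by (rule ext)

lemma const_on_balls_ind_ball: "K \<le> M \<Longrightarrow> const_on_balls (ind (ball c K)) M"
  unfolding const_on_balls_def
proof (intro allI ballI)
  fix a y assume "K \<le> M" "y \<in> ball a M"
  then have "y \<in> ball a K" using ball_antimono by blast
  then show "ind (ball c K) y = ind (ball c K) a" by (simp add: indicator_def ball_mem_iff[of y a K c])
qed

lemma ind_ball_expansion: assumes "K \<le> M"
  shows "ind (ball c K) = (\<lambda>y. \<Sum>g\<in>grid c K M. ind (ball g M) y)"
proof -
  have "ind (ball c K) = (\<lambda>y. \<Sum>g\<in>grid c K M. ind (ball c K) g * ind (ball g M) y)"
    by (rule ball_expansion_fun[OF assms const_on_balls_ind_ball[OF assms]]) (simp add: indicator_def split: if_splits)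
  also have "\<dots> = (\<lambda>y. \<Sum>g\<in>grid c K M. ind (ball g M) y)"
    using grid_subset_ball by (intro ext sum.cong) (auto simp: indicator_def)
  finally show ?thesis .
qed

lemma I_ind_ball_translate: "I (ind (ball g M)) = I (ind (ball 0 M))"
proof -
  have "I (\<lambda>x. ind (ball g M) (x + g)) = I (ind (ball g M))" by (rule I_translate[OF SF_ind_ball])
  moreover have "(\<lambda>x. ind (ball g M) (x + g)) = ind (ball 0 M)"
    using ball_translate[of _ g 0 M] by (auto simp: indicator_def fun_eq_iff)
  ultimately show ?thesis by simp
qed

definition vol :: "int \<Rightarrow> complex" where "vol M = I (ind (ball 0 M))"

lemma I_ind_ball: "I (ind (ball g M)) = vol M" unfolding vol_def by (rule I_ind_ball_translate)

lemma distr_ball_expansion: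
  assumes d: "distr v" and KM: "K \<le> M" and u: "const_on_balls f M"
    and s: "\<And>y. f y \<noteq> 0 \<Longrightarrow> y \<in> ball c K"
  shows "v f = (\<Sum>g\<in>grid c K M. f g * v (ind (ball g M)))"
proof -
  have "v f = v (\<lambda>y. \<Sum>g\<in>grid c K M. f g * ind (ball g M) y)"
    using ball_expansion_fun[OF KM u s] by simp
  also have "\<dots> = (\<Sum>g\<in>grid c K M. v (\<lambda>y. f g * ind (ball g M) y))"
    by (rule distr_sum[OF d grid_finite]) (rule SF_cmult[OF SF_ind_ball])
  finally show ?thesis by (simp add: distr_cmult[OF d SF_ind_ball])
qed

lemma I_ball_expansion:
  assumes "K \<le> M" "const_on_balls f M" "\<And>y. f y \<noteq> 0 \<Longrightarrow> y \<in> ball c K"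
  shows "I f = vol M * (\<Sum>g\<in>grid c K M. f g)"
  using distr_ball_expansion[OF distr_I assms] by (simp add: I_ind_ball sum_distrib_left mult.commute)

section \<open>Compactness of balls\<close>

lemma ball_fine_split:
  assumes Q: "\<And>A B. Q A \<Longrightarrow> B \<subseteq> A \<Longrightarrow> Q B"
    and coarse: "\<not> (\<exists>M\<ge>k. \<forall>b\<in>ball a k. Q (ball b M))"
  obtains g where "g \<in> ball a k" "\<not> (\<exists>M\<ge>k + 1. \<forall>b\<in>ball g (k + 1). Q (ball b M))"
proof (rule ccontr)
  assume "\<not> thesis"
  then have "\<forall>g\<in>grid a k (k + 1). \<exists>M. \<forall>b\<in>ball g (k + 1). Q (ball b M)"
    using that grid_subset_ball by blast
  then obtain Mf where Mf: "\<And>g b. g \<in> grid a k (k + 1) \<Longrightarrow> b \<in> ball g (k + 1) \<Longrightarrow> Q (ball b (Mf g))"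
    by metis
  define M where "M = Max (insert k (Mf ` grid a k (k + 1)))"
  have fin: "finite (insert k (Mf ` grid a k (k + 1)))" using grid_finite by simp
  have "Q (ball b M)" if b: "b \<in> ball a k" for b
  proof -
    obtain g where g: "g \<in> grid a k (k + 1)" "b \<in> ball g (k + 1)"
      using grid_cover[of k "k + 1" b a] b by auto
    have "Mf g \<le> M" unfolding M_def using fin g(1) by simp
    then show ?thesis using Q[OF Mf[OF g] ball_antimono] by blast
  qed
  moreover have "M \<ge> k" unfolding M_def using fin by simp
  ultimately show False using coarse by blast
qed

lemma av_nested_limit:
  fixes f :: "nat \<Rightarrow> 'a"
  assumes nest: "\<And>i j. j \<le> i \<Longrightarrow> av (f i - f j) \<le> rad (k + int j)"
  obtains L where "\<And>j. av (L - f j) \<le> rad (k + int j)"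
proof -
  have "\<exists>N. \<forall>m\<ge>N. \<forall>n\<ge>N. av (f m - f n) < e" if e: "e > 0" for e
  proof -
    obtain k1 where k1: "k1 \<ge> k" "rad k1 < e" using rad_small_ge[OF e] by blast
    have N: "rad (k + int (nat (k1 - k))) \<le> rad k1" using k1(1) by (simp add: rad_le_iff)
    have "av (f m - f n) < e" if "m \<ge> nat (k1 - k)" "n \<ge> nat (k1 - k)" for m n
    proof -
      have "av (f m - f (nat (k1 - k))) \<le> rad k1" using nest[OF that(1)] N by linarith
      moreover have "av (f (nat (k1 - k)) - f n) \<le> rad k1"
        using nest[OF that(2)] N av_commute[of "f (nat (k1 - k))" "f n"] by linarith
      moreover have "av (f m - f n) \<le> max (av (f m - f (nat (k1 - k)))) (av (f (nat (k1 - k)) - f n))"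
        using av_ultra[of "f m - f (nat (k1 - k))" "f (nat (k1 - k)) - f n"] by simp
      ultimately show ?thesis using k1(2) by linarith
    qed
    then show ?thesis by blast
  qed
  then obtain L where L: "\<And>e. e > 0 \<Longrightarrow> \<exists>N. \<forall>n\<ge>N. av (f n - L) < e" using av_complete by blast
  have "av (L - f j) \<le> rad (k + int j)" for j
  proof -
    obtain N where N: "\<And>n. n \<ge> N \<Longrightarrow> av (f n - L) < rad (k + int j)" using L[of "rad (k + int j)"] by auto
    have "av (L - f j) \<le> max (av (L - f (max N j))) (av (f (max N j) - f j))"
      using av_ultra[of "L - f (max N j)" "f (max N j) - f j"] by simp
    also have "\<dots> \<le> rad (k + int j)" using N[of "max N j"] nest[of j "max N j"] by (simp add: av_commute)
    finally show ?thesis .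
  qed
  then show ?thesis using that by blast
qed

lemma nested_balls_limit:
  fixes s :: "nat \<Rightarrow> 'n \<Rightarrow> 'a"
  assumes step: "\<And>j. s (Suc j) \<in> ball (s j) (k + int j)"
  obtains L where "\<And>j. L \<in> ball (s j) (k + int j)"
proof -
  have nest: "s i \<in> ball (s j) (k + int j)" if "j \<le> i" for i j
    using that
  proof (induction i)
    case (Suc i)
    show ?case
    proof (cases "j = Suc i")
      case False
      then have "ball (s i) (k + int i) \<subseteq> ball (s j) (k + int j)"
        using Suc ball_subset[of "s i" "s j" "k + int j" "k + int i"] by simp
      then show ?thesis using step[of i] by blast
    qed simp
  qed simp
  have "\<exists>L. \<forall>j. av (L - s j c) \<le> rad (k + int j)" for c
    using av_nested_limit[of "\<lambda>i. s i c" k] nest nrm_ge_component unfolding mem_ball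
    by (metis (no_types, lifting) minus_apply order.trans)
  then obtain L where "\<And>c j. av (L c - s j c) \<le> rad (k + int j)" by metis
  then have "L \<in> ball (s j) (k + int j)" for j unfolding mem_ball nrm_le_iff by simp
  then show ?thesis by (rule that)
qed

lemma uniform_radius_on_ball:
  assumes Q: "\<And>A B. Q A \<Longrightarrow> B \<subseteq> A \<Longrightarrow> Q B" and loc: "\<And>x. \<exists>k. Q (ball x k)"
  shows "\<exists>M\<ge>k. \<forall>b\<in>ball a k. Q (ball b M)"
proof (rule ccontr)
  define coarse where "coarse = (\<lambda>a k. \<not> (\<exists>M\<ge>k. \<forall>b\<in>ball a k. Q (ball b M)))"
  assume "\<not> ?thesis"
  then have coarse0: "coarse a k" unfolding coarse_def .
  define s where "s = rec_nat a (\<lambda>j x. SOME g. g \<in> ball x (k + int j) \<and> coarse g (k + int (Suc j)))"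
  have split: "\<exists>g. g \<in> ball (s j) (k + int j) \<and> coarse g (k + int (Suc j))"
    if coarse_j: "coarse (s j) (k + int j)" for j
  proof -
    obtain g where "g \<in> ball (s j) (k + int j)" "coarse g (k + int j + 1)"
      using ball_fine_split[of Q "k + int j" "s j"] Q coarse_j unfolding coarse_def by blast
    moreover have "k + int j + 1 = k + int (Suc j)" by simp
    ultimately show ?thesis by auto
  qed
  have sS: "s (Suc j) = (SOME g. g \<in> ball (s j) (k + int j) \<and> coarse g (k + int (Suc j)))" for j
    unfolding s_def by simp
  have coarse_s: "coarse (s j) (k + int j)" for j
  proof (induction j)
    case 0 then show ?case using coarse0 unfolding s_def by simp
  next
    case (Suc j) then show ?case using someI_ex[OF split[OF Suc]] unfolding sS by blast
  qed
  have "s (Suc j) \<in> ball (s j) (k + int j)" for j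
    using someI_ex[OF split[OF coarse_s]] unfolding sS by blast
  then obtain L where L: "\<And>j. L \<in> ball (s j) (k + int j)" using nested_balls_limit by blast
  obtain m where m: "Q (ball L m)" using loc by blast
  define j where "j = nat (m - k)"
  have "Q (ball b (k + int j))" if "b \<in> ball (s j) (k + int j)" for b
  proof -
    have "ball b (k + int j) = ball L (k + int j)" using that L ball_disj[of L "s j"] ball_eq by metis
    then show ?thesis using Q[OF m] ball_antimono[of m "k + int j" L] unfolding j_def by simp
  qed
  then show False using coarse_s[of j] unfolding coarse_def by auto
qed

lemma const_on_balls_if_const_near_supp:
  assumes h: "\<forall>b\<in>ball 0 K. \<forall>y\<in>ball b M. f y = f b" and s: "\<And>y. f y \<noteq> 0 \<Longrightarrow> y \<in> ball 0 K"
  shows "const_on_balls f M"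
  unfolding const_on_balls_def
proof (intro allI ballI)
  fix a y assume y: "y \<in> ball a M"
  then have "a \<in> ball y M" using ball_sym by blast
  then show "f y = f a" using h s y by (metis (no_types, lifting))
qed

lemma SF_const_on_balls:
  assumes "f \<in> \<S>"
  obtains K M where "K \<le> M" "M \<ge> N" "const_on_balls f M" "\<And>y. f y \<noteq> 0 \<Longrightarrow> y \<in> ball 0 K"
proof -
  obtain K where K: "\<And>y. f y \<noteq> 0 \<Longrightarrow> y \<in> ball 0 K"
    using SF_bounded_supp[OF assms] unfolding bounded_supp_ball by blast
  define Q where "Q = (\<lambda>A. \<forall>y\<in>A. \<forall>z\<in>A. f y = f z)"
  have Q_anti: "Q B" if "Q A" "B \<subseteq> A" for A B using that unfolding Q_def by blast
  have loc: "\<exists>k. Q (ball x k)" for x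
  proof -
    obtain k where "\<forall>y\<in>ball x k. f y = f x" using locally_constD[OF SF_locally_const[OF assms]] by blast
    then show ?thesis unfolding Q_def by (intro exI[of _ k] ballI) metis
  qed
  have "\<exists>M\<ge>K. \<forall>b\<in>ball 0 K. Q (ball b M)"
    by (rule uniform_radius_on_ball[of Q]) (fact Q_anti, fact loc)
  then obtain M where M: "M \<ge> K" "\<forall>b\<in>ball 0 K. \<forall>y\<in>ball b M. f y = f b"
    unfolding Q_def using ball_center by blast
  have "const_on_balls f M" by (rule const_on_balls_if_const_near_supp[OF M(2) K])
  then have "const_on_balls f (max M N)" by (rule const_on_balls_mono) simp
  then show ?thesis using that[of K "max M N"] M(1) K by simp
qed

section \<open>Supports\<close>

lemma not_in_suppd_ball:
  assumes "x \<notin> suppd av v"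
  obtains k where "\<And>\<psi>. \<psi> \<in> \<S> \<Longrightarrow> closureF av {y. \<psi> y \<noteq> 0} \<subseteq> ball x k \<Longrightarrow> v \<psi> = 0"
proof -
  obtain V where V: "openF av V" "x \<in> V" "\<forall>\<phi>\<in>\<S>. closureF av {y. \<phi> y \<noteq> 0} \<subseteq> V \<longrightarrow> v \<phi> = 0"
    using assms unfolding suppd_def by blast
  obtain k where "ball x k \<subseteq> V" using open_has_ball[OF V(1,2)] by blast
  then show ?thesis using that V(3) by blast
qed

lemma vanishes_off_suppd:
  assumes d: "distr v" and g: "g \<in> \<S>" and U: "openF av U" "suppd av v \<subseteq> U" and gU: "\<forall>x\<in>U. g x = 0"
  shows "v g = 0"
proof -
  define Q where "Q = (\<lambda>A. (\<forall>y\<in>A. g y = 0) \<or> (\<forall>\<psi>\<in>\<S>. closureF av {x. \<psi> x \<noteq> 0} \<subseteq> A \<longrightarrow> v \<psi> = 0))"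
  obtain K M0 where K: "K \<le> M0" "const_on_balls g M0" "\<And>y. g y \<noteq> 0 \<Longrightarrow> y \<in> ball 0 K"
    using SF_const_on_balls[OF g] by metis
  have "\<exists>k. Q (ball x k)" for x
  proof (cases "g x = 0")
    case True
    then show ?thesis using const_on_ballsD[OF K(2)] unfolding Q_def by metis
  next
    case False
    then have "x \<notin> suppd av v" using gU U(2) by blast
    then show ?thesis unfolding Q_def by (metis not_in_suppd_ball)
  qed
  moreover have Q_anti: "Q B" if "Q A" "B \<subseteq> A" for A B using that unfolding Q_def by blast
  ultimately obtain M where M: "M \<ge> K" "\<forall>b\<in>ball 0 K. Q (ball b M)"
    using uniform_radius_on_ball by metis
  have uc: "const_on_balls g (max M M0)" using K(2) by (rule const_on_balls_mono) simp
  have KM: "K \<le> max M M0" using M(1) by simp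
  have "g h * v (ind (ball h (max M M0))) = 0" if "h \<in> grid 0 K (max M M0)" for h
  proof -
    have "Q (ball h (max M M0))"
      using Q_anti[OF bspec[OF M(2) grid_subset_ball[OF that]] ball_antimono] by simp
    then show ?thesis using SF_ind_ball supp_ind_ball unfolding Q_def by auto
  qed
  then have "(\<Sum>h\<in>grid 0 K (max M M0). g h * v (ind (ball h (max M M0)))) = 0"
    by (intro sum.neutral) blast
  then show ?thesis using distr_ball_expansion[OF d KM uc K(3)] by simp
qed

lemma distribution_mult_d: assumes d: "distr v" and f: "f \<in> \<S>" shows "distr (mult_d f v)"
  unfolding distribution_def mult_d_def
proof (intro conjI ballI allI)
  fix \<phi> \<psi> assume p: "\<phi> \<in> \<S>" "\<psi> \<in> \<S>"
  have "v (\<lambda>y. f y * (\<phi> y + \<psi> y)) = v (\<lambda>y. f y * \<phi> y + f y * \<psi> y)" by (simp add: distrib_left)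
  also have "\<dots> = v (\<lambda>y. f y * \<phi> y) + v (\<lambda>y. f y * \<psi> y)"
    by (rule distr_add[OF d]) (rule SF_mult_left[OF p(1) SF_locally_const[OF f]], rule SF_mult_left[OF p(2) SF_locally_const[OF f]])
  finally show "v (\<lambda>y. f y * (\<phi> y + \<psi> y)) = v (\<lambda>y. f y * \<phi> y) + v (\<lambda>y. f y * \<psi> y)" .
next
  fix \<phi> c assume p: "\<phi> \<in> \<S>"
  have "v (\<lambda>y. f y * (c * \<phi> y)) = v (\<lambda>y. c * (f y * \<phi> y))" by (simp add: mult.left_commute)
  also have "\<dots> = c * v (\<lambda>y. f y * \<phi> y)" by (rule distr_cmult[OF d SF_mult_left[OF p SF_locally_const[OF f]]])
  finally show "v (\<lambda>y. f y * (c * \<phi> y)) = c * v (\<lambda>y. f y * \<phi> y)" .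
qed

lemma suppd_mult_d_subset:
  assumes d: "distr v" and K: "\<And>y. f y \<noteq> 0 \<Longrightarrow> y \<in> ball 0 K"
  shows "suppd av (mult_d f v) \<subseteq> ball 0 K"
proof
  fix x assume "x \<in> suppd av (mult_d f v)"
  then obtain \<psi> where \<psi>: "closureF av {y. \<psi> y \<noteq> 0} \<subseteq> ball x K" "v (\<lambda>y. f y * \<psi> y) \<noteq> 0"
    using openF_ball[of x K] ball_center[of x K] unfolding suppd_def mult_d_def by blast
  then have "\<not> (\<forall>y. f y * \<psi> y = 0)" using distr_eq_zero[OF d, of "\<lambda>y. f y * \<psi> y"] by blast
  then obtain y where "f y \<noteq> 0" "\<psi> y \<noteq> 0" by auto
  then have "y \<in> ball 0 K" "y \<in> ball x K" using K \<psi>(1) closureF_sub[of "{y. \<psi> y \<noteq> 0}"] by auto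
  then show "x \<in> ball 0 K" using ball_disj[of y 0 K x] by simp
qed

lemma FTcs_mult_d:
  assumes d: "distr v" and f: "f \<in> \<S>"
  shows "FTcs av \<chi> (mult_d f v) \<eta> = v (\<lambda>x. f x * wave \<eta> x)"
proof -
  obtain K where K: "\<And>y. f y \<noteq> 0 \<Longrightarrow> y \<in> ball 0 K" using SF_bounded_supp[OF f] unfolding bounded_supp_ball by blast
  define Q where "Q = (\<lambda>\<rho>. \<rho> \<in> \<S> \<and> (\<exists>U. openF av U \<and> suppd av (mult_d f v) \<subseteq> U \<and> (\<forall>x\<in>U. \<rho> x = 1)))"
  have "Q (ind (ball 0 K))" unfolding Q_def
  proof (intro conjI exI[of _ "ball 0 K"])
    show "suppd av (mult_d f v) \<subseteq> ball 0 K" by (rule suppd_mult_d_subset[OF d K])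
  qed (auto simp: indicator_def SF_ind_ball openF_ball)
  then have "Q (SOME \<rho>. Q \<rho>)" by (metis someI)
  then obtain \<rho> U where \<rho>: "\<rho> = (SOME \<rho>. Q \<rho>)" "\<rho> \<in> \<S>" "openF av U" "suppd av (mult_d f v) \<subseteq> U" "\<forall>x\<in>U. \<rho> x = 1"
    unfolding Q_def by blast
  have ft: "FTcs av \<chi> (mult_d f v) \<eta> = v (\<lambda>y. f y * (\<rho> y * wave \<eta> y))"
    unfolding FTcs_def cs_ext_def mult_d_def wave_def Let_def \<rho>(1) Q_def by simp
  define G where "G = (\<lambda>y. ind (ball 0 K) y * ((\<rho> y - 1) * wave \<eta> y))"
  have G: "G \<in> \<S>" unfolding G_def
    by (rule SF_mult[OF SF_ind_ball]) (intro locally_const_mult locally_const_wave locally_const_add[of \<rho> "\<lambda>y. -1", simplified] SF_locally_const[OF \<rho>(2)] locally_const_const)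
  have "mult_d f v G = 0"
    by (rule vanishes_off_suppd[OF distribution_mult_d[OF d f] G \<rho>(3,4)]) (simp add: G_def \<rho>(5))
  then have z: "v (\<lambda>y. f y * G y) = 0" unfolding mult_d_def .
  have fG: "(\<lambda>y. f y * G y) = (\<lambda>y. f y * (\<rho> y * wave \<eta> y) - f y * wave \<eta> y)"
  proof
    fix y show "f y * G y = f y * (\<rho> y * wave \<eta> y) - f y * wave \<eta> y"
      using K[of y] unfolding G_def by (cases "f y = 0") (auto simp: indicator_def algebra_simps)
  qed
  have s1: "(\<lambda>y. f y * (\<rho> y * wave \<eta> y)) \<in> \<S>"
    by (rule SF_mult[OF f]) (intro locally_const_mult locally_const_wave SF_locally_const[OF \<rho>(2)])
  have s2: "(\<lambda>y. f y * wave \<eta> y) \<in> \<S>" by (rule SF_mult[OF f locally_const_wave])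
  have "v (\<lambda>y. f y * (\<rho> y * wave \<eta> y)) - v (\<lambda>y. f y * wave \<eta> y) = 0"
    using z unfolding fG distr_diff[OF d s1 s2] .
  then show ?thesis using ft by simp
qed

section \<open>Fourier transforms of wave packets\<close>

lemma FT_wave: "FT I \<chi> \<phi> y = I (\<lambda>x. \<phi> x * wave y x)"
  unfolding FT_def wave_def by simp

lemma wave_eq_1_on_ball: "x \<in> ball 0 M \<Longrightarrow> nrm av \<xi> \<le> rad (- M) \<Longrightarrow> wave \<xi> x = 1"
proof -
  assume x: "x \<in> ball 0 M" and xi: "nrm av \<xi> \<le> rad (- M)"
  have "nrm av x * nrm av \<xi> \<le> rad M * rad (- M)"
    using x xi unfolding mem_ball_0 by (intro mult_mono) auto
  also have "\<dots> = 1" by (simp add: rad_minus)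
  finally show ?thesis by (rule wave_eq_1_if_nrm_le)
qed

lemma exists_wave_ne_1:
  assumes "rad (- M) < nrm av \<xi>"
  obtains b where "b \<in> ball 0 M" "wave \<xi> b \<noteq> 1"
proof -
  obtain i where i: "nrm av \<xi> = av (\<xi> i)" using nrm_attained by blast
  then have gt: "av (\<xi> i) > rad (- M)" using assms by simp
  then have ge: "av (\<xi> i) \<ge> rad (- M - 1)" by (rule av_gt_rad_imp_ge)
  have xi0: "\<xi> i \<noteq> 0" using gt by (metis av_0 rad_pos not_less_iff_gr_or_eq)
  define b :: "'n \<Rightarrow> 'a" where "b = (\<lambda>j. if j = i then inverse (w * \<xi> i) else 0)"
  have "av (inverse (w * \<xi> i)) = rad (- 1) / av (\<xi> i)"
    by (simp add: av_mult av_inverse rad_minus rad_1 divide_inverse)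
  also have "\<dots> \<le> rad (- 1) / rad (- M - 1)"
    using ge less_trans[OF rad_pos gt] by (intro divide_left_mono mult_pos_pos) auto
  also have "\<dots> = rad M" by (simp add: rad_diff[symmetric])
  finally have "nrm av b \<le> rad M" unfolding nrm_le_iff b_def by auto
  moreover have "dotp b \<xi> = (\<Sum>j\<in>UNIV. if j = i then inverse (w * \<xi> i) * \<xi> i else 0)"
    unfolding dotp_def b_def by (rule sum.cong) auto
  then have "dotp b \<xi> = inverse w" using xi0 by simp
  then have "av (- dotp b \<xi>) > 1"
    using one_less_inverse[OF av_unif_pos av_unif_less_1] by (simp add: av_inverse)
  then have "wave \<xi> b \<noteq> 1" unfolding wave_def chi_eq_1_iff by simp
  ultimately show ?thesis using that unfolding mem_ball_0 by blast
qed

lemma I_packet_0: "I (packet 0 M \<xi>) = (if nrm av \<xi> \<le> rad (- M) then vol M else 0)"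
proof (cases "nrm av \<xi> \<le> rad (- M)")
  case True
  have "packet 0 M \<xi> = ind (ball 0 M)"
    using wave_eq_1_on_ball[OF _ True] by (auto simp: packet_def indicator_def)
  then show ?thesis using True by (simp add: vol_def)
next
  case False
  then have "rad (- M) < nrm av \<xi>" by simp
  then obtain b where b: "b \<in> ball 0 M" "wave \<xi> b \<noteq> 1" by (rule exists_wave_ne_1)
  have "x + b \<in> ball 0 M \<longleftrightarrow> x \<in> ball 0 M" for x
    using ball_mem_iff[of "x + b" x M 0] b(1) by (simp add: mem_ball)
  then have "(\<lambda>x. packet 0 M \<xi> (x + b)) = (\<lambda>x. wave \<xi> b * packet 0 M \<xi> x)"
    unfolding packet_def wave_add by (simp add: indicator_def fun_eq_iff)
  then have "I (packet 0 M \<xi>) = wave \<xi> b * I (packet 0 M \<xi>)"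
    using I_translate[OF SF_packet, of 0 M \<xi> b] I_cmult[OF SF_packet] by simp
  then show ?thesis using b(2) False by (simp add: algebra_simps)
qed

lemma FT_packet: "FT I \<chi> (packet a k \<eta>) y = vol k * wave \<eta> a * packet (- \<eta>) (- k) a y"
proof -
  have "FT I \<chi> (packet a k \<eta>) y = I (\<lambda>x. packet a k \<eta> x * wave y x)" by (rule FT_wave)
  also have "\<dots> = I (\<lambda>x. packet a k (\<eta> + y) x)"
    unfolding packet_def by (simp add: wave_add_freq mult.assoc)
  also have "\<dots> = I (\<lambda>x. packet a k (\<eta> + y) (x + a))" by (rule I_translate[OF SF_packet, symmetric])
  also have "(\<lambda>x. packet a k (\<eta> + y) (x + a)) = (\<lambda>x. wave (\<eta> + y) a * packet 0 k (\<eta> + y) x)"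
  proof
    fix x
    have "x + a \<in> ball a k \<longleftrightarrow> x \<in> ball 0 k" using ball_translate[of x a 0 k] by simp
    then show "packet a k (\<eta> + y) (x + a) = wave (\<eta> + y) a * packet 0 k (\<eta> + y) x"
      unfolding packet_def wave_add by (simp add: indicator_def)
  qed
  also have "I \<dots> = wave (\<eta> + y) a * I (packet 0 k (\<eta> + y))" by (rule I_cmult[OF SF_packet])
  also have "\<dots> = wave (\<eta> + y) a * (if nrm av (\<eta> + y) \<le> rad (- k) then vol k else 0)" by (simp add: I_packet_0)
  also have "\<dots> = vol k * wave \<eta> a * packet (- \<eta>) (- k) a y"
  proof -
    have "y \<in> ball (- \<eta>) (- k) \<longleftrightarrow> nrm av (\<eta> + y) \<le> rad (- k)" unfolding mem_ball by (simp add: add.commute)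
    then show ?thesis unfolding packet_def wave_add_freq by (auto simp: indicator_def wave_swap[of a y])
  qed
  finally show ?thesis .
qed

lemma FT_ind_ball: "FT I \<chi> (ind (ball a k)) y = vol k * wave y a * ind (ball 0 (- k)) y"
  using FT_packet[of a k 0 y] unfolding packet_freq_0 by (simp add: packet_def wave_swap)

text \<open>Self-duality of the Haar measure, via Fourier inversion at 0.\<close>

lemma vol_mult_vol_uminus: "vol k * vol (- k) = 1"
proof -
  have f: "FT I \<chi> (ind (ball 0 k)) = (\<lambda>y. vol k * ind (ball 0 (- k)) y)"
    using FT_ind_ball[of 0 k] by auto
  have "FT I \<chi> (FT I \<chi> (ind (ball 0 k))) 0 = ind (ball 0 k) (- 0)" by (rule FT_FT_apply[OF SF_ind_ball])
  then have "FT I \<chi> (\<lambda>y. vol k * ind (ball 0 (- k)) y) 0 = 1" unfolding f by (simp add: indicator_def)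
  moreover have "FT I \<chi> (\<lambda>y. vol k * ind (ball 0 (- k)) y) 0 = vol k * vol (- k)"
    unfolding FT_wave by (simp add: I_cmult[OF SF_ind_ball] vol_def)
  ultimately show ?thesis by simp
qed

lemma vol_nonzero[simp]: "vol k \<noteq> 0" using vol_mult_vol_uminus[of k] by auto

lemma FT_ball_expansion:
  assumes f: "f \<in> \<S>" and KM: "K \<le> M" and u: "const_on_balls f M" and s: "\<And>y. f y \<noteq> 0 \<Longrightarrow> y \<in> ball 0 K"
  shows "FT I \<chi> f = (\<lambda>y. \<Sum>g\<in>grid 0 K M. f g * vol M * packet 0 (- M) g y)"
proof
  fix y
  have "FT I \<chi> f y = I (\<lambda>x. \<Sum>g\<in>grid 0 K M. f g * packet g M y x)"
  proof -
    have "(\<lambda>x. f x * wave y x) = (\<lambda>x. \<Sum>g\<in>grid 0 K M. f g * packet g M y x)"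
    proof
      fix x
      have e: "f x = (\<Sum>g\<in>grid 0 K M. f g * ind (ball g M) x)" by (rule ball_expansion[OF KM u s])
      have "f x * wave y x = (\<Sum>g\<in>grid 0 K M. f g * ind (ball g M) x) * wave y x"
        by (simp only: e)
      then show "f x * wave y x = (\<Sum>g\<in>grid 0 K M. f g * packet g M y x)"
        unfolding packet_def by (simp add: sum_distrib_right mult.assoc)
    qed
    then show ?thesis unfolding FT_wave by simp
  qed
  also have "\<dots> = (\<Sum>g\<in>grid 0 K M. I (\<lambda>x. f g * packet g M y x))"
    by (rule distr_sum[OF distr_I grid_finite]) (rule SF_cmult[OF SF_packet])
  also have "\<dots> = (\<Sum>g\<in>grid 0 K M. f g * vol M * packet 0 (- M) g y)"
  proof (rule sum.cong)
    fix g
    have "I (\<lambda>x. f g * packet g M y x) = f g * I (packet g M y)" by (rule I_cmult[OF SF_packet])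
    also have "I (packet g M y) = FT I \<chi> (ind (ball g M)) y"
      unfolding FT_wave packet_def by simp
    also have "\<dots> = vol M * packet 0 (- M) g y"
      unfolding FT_ind_ball packet_def by (simp add: wave_swap mult.commute)
    finally show "I (\<lambda>x. f g * packet g M y x) = f g * vol M * packet 0 (- M) g y" by (simp add: mult.assoc)
  qed simp
  finally show "FT I \<chi> f y = (\<Sum>g\<in>grid 0 K M. f g * vol M * packet 0 (- M) g y)" .
qed

lemma FT_SF: assumes f: "f \<in> \<S>" shows "FT I \<chi> f \<in> \<S>"
proof -
  obtain K M where KM: "K \<le> M" "const_on_balls f M" and s: "\<And>y. f y \<noteq> 0 \<Longrightarrow> y \<in> ball 0 K"
    by (metis SF_const_on_balls[OF f])
  have "(\<lambda>y. \<Sum>g\<in>grid 0 K M. f g * vol M * packet 0 (- M) g y) \<in> \<S>"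
    by (intro SF_sum grid_finite SF_cmult SF_packet)
  then show ?thesis using FT_ball_expansion[OF f KM(1,2) s] by simp
qed

lemma FT_add: "f \<in> \<S> \<Longrightarrow> g \<in> \<S> \<Longrightarrow> FT I \<chi> (\<lambda>x. f x + g x) = (\<lambda>y. FT I \<chi> f y + FT I \<chi> g y)"
proof
  fix y assume f: "f \<in> \<S>" and g: "g \<in> \<S>"
  have "FT I \<chi> (\<lambda>x. f x + g x) y = I (\<lambda>x. f x * wave y x + g x * wave y x)"
    unfolding FT_wave by (simp add: distrib_right)
  also have "\<dots> = FT I \<chi> f y + FT I \<chi> g y"
    unfolding FT_wave by (rule I_add) (simp_all add: SF_mult[OF f locally_const_wave] SF_mult[OF g locally_const_wave])
  finally show "FT I \<chi> (\<lambda>x. f x + g x) y = FT I \<chi> f y + FT I \<chi> g y" .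
qed

lemma FT_cmult: "f \<in> \<S> \<Longrightarrow> FT I \<chi> (\<lambda>x. c * f x) = (\<lambda>y. c * FT I \<chi> f y)"
proof
  fix y assume f: "f \<in> \<S>"
  have "FT I \<chi> (\<lambda>x. c * f x) y = I (\<lambda>x. c * (f x * wave y x))"
    unfolding FT_wave by (simp add: mult.assoc)
  also have "\<dots> = c * FT I \<chi> f y" unfolding FT_wave by (rule I_cmult) (rule SF_mult[OF f locally_const_wave])
  finally show "FT I \<chi> (\<lambda>x. c * f x) y = c * FT I \<chi> f y" .
qed

lemma distribution_FTd: assumes d: "distr v" shows "distr (FTd I \<chi> v)"
  unfolding distribution_def FTd_def
proof (intro conjI ballI allI)
  fix f g assume f: "f \<in> \<S>" and g: "g \<in> \<S>"
  show "v (FT I \<chi> (\<lambda>x. f x + g x)) = v (FT I \<chi> f) + v (FT I \<chi> g)"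
    unfolding FT_add[OF f g] by (rule distr_add[OF d FT_SF[OF f] FT_SF[OF g]])
next
  fix f c assume f: "f \<in> \<S>"
  show "v (FT I \<chi> (\<lambda>x. c * f x)) = c * v (FT I \<chi> f)"
    unfolding FT_cmult[OF f] by (rule distr_cmult[OF d FT_SF[OF f]])
qed

lemma FTd_packet: "distr v \<Longrightarrow> FTd I \<chi> v (packet a k \<eta>) = vol k * wave \<eta> a * v (packet (- \<eta>) (- k) a)"
proof -
  assume d: "distr v"
  have "FT I \<chi> (packet a k \<eta>) = (\<lambda>y. (vol k * wave \<eta> a) * packet (- \<eta>) (- k) a y)"
    using FT_packet by auto
  then show ?thesis unfolding FTd_def using distr_cmult[OF d SF_packet] by simp
qed

lemma FTd_packet_nonzero_iff:
  "distr v \<Longrightarrow> FTd I \<chi> v (packet a k \<eta>) \<noteq> 0 \<longleftrightarrow> v (packet (- \<eta>) (- k) a) \<noteq> 0"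
  using FTd_packet[of v a k \<eta>] by simp

lemma distribution_I_commute:
  assumes d: "distr v" and KM: "K \<le> M"
    and h1: "\<And>\<theta>. (\<lambda>y. h y \<theta>) \<in> \<S>" and h2: "\<And>y. const_on_balls (h y) M"
    and h3: "\<And>y \<theta>. h y \<theta> \<noteq> 0 \<Longrightarrow> \<theta> \<in> ball 0 K"
  shows "v (\<lambda>y. I (h y)) = I (\<lambda>\<theta>. v (\<lambda>y. h y \<theta>))"
proof -
  have "v (\<lambda>y. I (h y)) = v (\<lambda>y. vol M * (\<Sum>g\<in>grid 0 K M. h y g))"
    using I_ball_expansion[OF KM h2 h3] by simp
  also have "\<dots> = vol M * v (\<lambda>y. \<Sum>g\<in>grid 0 K M. h y g)"
    by (rule distr_cmult[OF d]) (rule SF_sum[OF grid_finite h1])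
  also have "\<dots> = vol M * (\<Sum>g\<in>grid 0 K M. v (\<lambda>y. h y g))"
    by (simp add: distr_sum[OF d grid_finite h1])
  also have "\<dots> = I (\<lambda>\<theta>. v (\<lambda>y. h y \<theta>))"
  proof -
    have u: "const_on_balls (\<lambda>\<theta>. v (\<lambda>y. h y \<theta>)) M"
      unfolding const_on_balls_def
    proof (intro allI ballI)
      fix a t assume t: "t \<in> ball a M"
      have "(\<lambda>y. h y t) = (\<lambda>y. h y a)" using const_on_ballsD[OF h2 t] by simp
      then show "v (\<lambda>y. h y t) = v (\<lambda>y. h y a)" by simp
    qed
    have z: "t \<in> ball 0 K" if "v (\<lambda>y. h y t) \<noteq> 0" for t
    proof (rule ccontr)
      assume "t \<notin> ball 0 K"
      then have "\<forall>y. h y t = 0" using h3 by metis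
      then have "v (\<lambda>y. h y t) = 0" using distr_eq_zero[OF d, of "\<lambda>y. h y t"] by simp
      then show False using that by simp
    qed
    show ?thesis using I_ball_expansion[OF KM u z] by simp
  qed
  finally show ?thesis .
qed

lemma suppd_iff_balls: assumes d: "distr v"
  shows "x \<in> suppd av v \<longleftrightarrow> (\<forall>k. \<exists>a r. ball a r \<subseteq> ball x k \<and> v (ind (ball a r)) \<noteq> 0)"
proof
  assume x: "x \<in> suppd av v"
  show "\<forall>k. \<exists>a r. ball a r \<subseteq> ball x k \<and> v (ind (ball a r)) \<noteq> 0"
  proof
    fix k
    obtain \<phi> where \<phi>: "\<phi> \<in> \<S>" "closureF av {y. \<phi> y \<noteq> 0} \<subseteq> ball x k" "v \<phi> \<noteq> 0"
      using x openF_ball[of x k] ball_center[of x k] unfolding suppd_def mem_Collect_eq by blast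
    obtain K M where KM: "K \<le> M" "M \<ge> k" "const_on_balls \<phi> M" "\<And>y. \<phi> y \<noteq> 0 \<Longrightarrow> y \<in> ball 0 K"
      using SF_const_on_balls[OF \<phi>(1), where N=k] by blast
    have "(\<Sum>g\<in>grid 0 K M. \<phi> g * v (ind (ball g M))) \<noteq> 0"
      using \<phi>(3) distr_ball_expansion[OF d KM(1,3,4)] by simp
    then obtain g where g0: "g \<in> grid 0 K M" "\<phi> g * v (ind (ball g M)) \<noteq> 0"
      by (rule sum.not_neutral_contains_not_neutral)
    then have g: "\<phi> g \<noteq> 0" "v (ind (ball g M)) \<noteq> 0" by auto
    have "g \<in> {y. \<phi> y \<noteq> 0}" using g(1) by simp
    then have "g \<in> closureF av {y. \<phi> y \<noteq> 0}" using closureF_sub by (rule subsetD[rotated])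
    then have "g \<in> ball x k" using \<phi>(2) by (rule subsetD[rotated])
    then have "ball g M \<subseteq> ball x k" using ball_subset KM(2) by blast
    then show "\<exists>a r. ball a r \<subseteq> ball x k \<and> v (ind (ball a r)) \<noteq> 0" using g(2) by blast
  qed
next
  assume h: "\<forall>k. \<exists>a r. ball a r \<subseteq> ball x k \<and> v (ind (ball a r)) \<noteq> 0"
  show "x \<in> suppd av v" unfolding suppd_def
  proof (intro CollectI allI impI)
    fix U assume U: "openF av U \<and> x \<in> U"
    then obtain k where k: "ball x k \<subseteq> U" using open_has_ball by blast
    obtain a r where ar: "ball a r \<subseteq> ball x k" "v (ind (ball a r)) \<noteq> 0" using h by blast
    show "\<exists>\<phi>\<in>\<S>. closureF av {y. \<phi> y \<noteq> 0} \<subseteq> U \<and> v \<phi> \<noteq> 0"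
      using SF_ind_ball supp_ind_ball ar k by (intro bexI[of _ "ind (ball a r)"]) auto
  qed
qed

section \<open>Cones\<close>

lemma Lambda_nonzero: "c \<in> \<Lambda> \<Longrightarrow> c \<noteq> 0" using finite_index unfolding fin_index_subgroup_def by blast
lemma Lambda_one: "1 \<in> \<Lambda>" using finite_index unfolding fin_index_subgroup_def by blast
lemma Lambda_mult: "a \<in> \<Lambda> \<Longrightarrow> b \<in> \<Lambda> \<Longrightarrow> a * b \<in> \<Lambda>" using finite_index unfolding fin_index_subgroup_def by blast
lemma Lambda_inverse: "a \<in> \<Lambda> \<Longrightarrow> inverse a \<in> \<Lambda>" using finite_index unfolding fin_index_subgroup_def by blast
lemma Lambda_unif_power: "w ^ n \<in> \<Lambda>" by (induction n) (auto intro: Lambda_mult Lambda_one unif_in_Lambda)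
lemma Lambda_unif_powi: "w powi j \<in> \<Lambda>"
proof (cases "j \<ge> 0")
  case True then show ?thesis by (simp add: power_int_def Lambda_unif_power)
next
  case False
  then have "w powi j = inverse (w ^ nat (- j))" by (simp add: power_int_def power_inverse)
  then show ?thesis using Lambda_inverse[OF Lambda_unif_power] by simp
qed
lemma Lambda_av_eq_rad: "c \<in> \<Lambda> \<Longrightarrow> \<exists>j. av c = rad (- j)"
proof -
  assume "c \<in> \<Lambda>"
  then obtain k where "av c = rad k" using av_eq_rad Lambda_nonzero by blast
  then show ?thesis by (intro exI[of _ "- k"]) simp
qed

text \<open>Cones over small balls around \<xi>; every open cone containing \<xi> contains one of them,
  which reduces asymptotic cones to this family.\<close>

definition cone :: "('n \<Rightarrow> 'a) \<Rightarrow> int \<Rightarrow> ('n \<Rightarrow> 'a) set" where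
  "cone \<xi> m = {smul c y | c y. c \<in> \<Lambda> \<and> y \<in> ball \<xi> m}"

definition unbounded_on_cone :: "(('n \<Rightarrow> 'a) \<Rightarrow> complex) \<Rightarrow> ('n \<Rightarrow> 'a) \<Rightarrow> int \<Rightarrow> bool" where
  "unbounded_on_cone f \<xi> m \<longleftrightarrow> (\<forall>C. \<exists>\<eta>\<in>cone \<xi> m. nrm av \<eta> > C \<and> f \<eta> \<noteq> 0)"

lemma coneI: "c \<in> \<Lambda> \<Longrightarrow> y \<in> ball \<xi> m \<Longrightarrow> smul c y \<in> cone \<xi> m" unfolding cone_def by blast
lemma coneE: "\<eta> \<in> cone \<xi> m \<Longrightarrow> (\<And>c y. c \<in> \<Lambda> \<Longrightarrow> y \<in> ball \<xi> m \<Longrightarrow> \<eta> = smul c y \<Longrightarrow> P) \<Longrightarrow> P"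
  unfolding cone_def by blast
lemma mem_cone_self: "\<xi> \<in> cone \<xi> m" using coneI[OF Lambda_one, of \<xi> \<xi> m] by simp

lemma nrm_cone_elem: "c \<in> \<Lambda> \<Longrightarrow> y \<in> ball \<xi> m \<Longrightarrow> rad m < nrm av \<xi> \<Longrightarrow> nrm av (smul c y) = av c * nrm av \<xi>"
  using nrm_ball[of y \<xi> m] nrm_smul[of c y] by simp

lemma cone_elemE:
  assumes "\<eta> \<in> cone \<xi> m" "rad m < nrm av \<xi>"
  obtains c y j where "c \<in> \<Lambda>" "y \<in> ball \<xi> m" "\<eta> = smul c y" "av c = rad (- j)"
    "nrm av \<eta> = rad (- j) * nrm av \<xi>"
proof -
  obtain c y where cy: "c \<in> \<Lambda>" "y \<in> ball \<xi> m" "\<eta> = smul c y" using assms(1) by (rule coneE)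
  moreover obtain j where "av c = rad (- j)" using Lambda_av_eq_rad[OF cy(1)] by blast
  ultimately show ?thesis using that nrm_cone_elem[OF cy(1,2) assms(2)] by simp
qed

lemma is_cone_cone: "rad m < nrm av \<xi> \<Longrightarrow> is_cone \<Lambda> (cone \<xi> m)"
  unfolding is_cone_def
proof (intro conjI ballI subsetI)
  fix \<eta> assume m: "rad m < nrm av \<xi>" and e: "\<eta> \<in> cone \<xi> m"
  obtain c y where cy: "c \<in> \<Lambda>" "y \<in> ball \<xi> m" "\<eta> = smul c y" using e by (rule coneE)
  have "nrm av \<eta> = av c * nrm av \<xi>" using nrm_cone_elem[OF cy(1,2) m] cy(3) by simp
  moreover have "av c > 0" using av_pos Lambda_nonzero cy(1) by blast
  moreover have "nrm av \<xi> > 0" using m rad_pos[of m] by linarith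
  ultimately have "nrm av \<eta> > 0" by simp
  then show "\<eta> \<in> {x. x \<noteq> 0}" by auto
next
  fix c \<eta> assume c: "c \<in> \<Lambda>" and e: "\<eta> \<in> cone \<xi> m"
  obtain c' y where cy: "c' \<in> \<Lambda>" "y \<in> ball \<xi> m" "\<eta> = smul c' y" using e by (rule coneE)
  have "smul c \<eta> = smul (c * c') y" using cy(3) smul_smul by simp
  then show "smul c \<eta> \<in> cone \<xi> m" using coneI[OF Lambda_mult[OF c cy(1)] cy(2)] by simp
qed

lemma openF_cone: "openF av (cone \<xi> m)"
  unfolding openF_def
proof
  fix p assume "p \<in> cone \<xi> m"
  then obtain c y where cy: "c \<in> \<Lambda>" "y \<in> ball \<xi> m" "p = smul c y" by (rule coneE)
  have c0: "c \<noteq> 0" using Lambda_nonzero cy(1) by blast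
  have avc: "av c > 0" using av_pos c0 by blast
  show "\<exists>r>0. \<forall>z. nrm av (z - p) < r \<longrightarrow> z \<in> cone \<xi> m"
  proof (intro exI[of _ "av c * rad m"] conjI allI impI)
    show "av c * rad m > 0" using avc by simp
    fix z assume z: "nrm av (z - p) < av c * rad m"
    define z' where "z' = smul (inverse c) z"
    have "smul (inverse c) p = y" using cy(3) smul_inverse_smul c0 by simp
    then have "z' - y = smul (inverse c) z - smul (inverse c) p" unfolding z'_def by simp
    also have "\<dots> = smul (inverse c) (z - p)" by (rule smul_diff)
    finally have "z' - y = smul (inverse c) (z - p)" .
    then have "nrm av (z' - y) = nrm av (z - p) / av c" by (simp add: nrm_smul av_inverse divide_inverse mult.commute)
    also have "\<dots> < rad m" using z avc by (simp add: divide_less_eq mult.commute)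
    finally have "z' \<in> ball y m" unfolding mem_ball by simp
    then have "z' \<in> ball \<xi> m" using ball_trans cy(2) by blast
    moreover have "z = smul c z'" unfolding z'_def by (rule smul_smul_inverse[OF c0, symmetric])
    ultimately show "z \<in> cone \<xi> m" using coneI[OF cy(1)] by simp
  qed
qed

lemma cone_add_small:
  assumes m: "rad m < nrm av \<xi>" and e: "\<eta> \<in> cone \<xi> m" and th: "nrm av \<theta> \<le> B"
    and big1: "nrm av \<eta> > nrm av \<xi> * B / rad m" and big2: "nrm av \<eta> > B"
  shows "\<eta> + \<theta> \<in> cone \<xi> m \<and> nrm av (\<eta> + \<theta>) = nrm av \<eta>"
proof
  obtain c y where cy: "c \<in> \<Lambda>" "y \<in> ball \<xi> m" "\<eta> = smul c y" using e by (rule coneE)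
  have c0: "c \<noteq> 0" using Lambda_nonzero cy(1) by blast
  have avc: "av c > 0" using av_pos c0 by blast
  have nx: "nrm av \<xi> > 0" using m rad_pos[of m] by linarith
  have ne: "nrm av \<eta> = av c * nrm av \<xi>" using nrm_cone_elem[OF cy(1,2) m] cy(3) by simp
  have B0: "B \<ge> 0" using th nrm_nonneg order.trans by blast
  have "av c * nrm av \<xi> > nrm av \<xi> * B / rad m" using big1 ne by simp
  then have "av c > B / rad m" using nx by (simp add: field_simps)
  then have "av c * rad m > B" by (simp add: field_simps)
  then have q: "nrm av \<theta> < av c * rad m" using th by linarith
  define t where "t = smul (inverse c) \<theta>"
  have "nrm av t = nrm av \<theta> / av c" unfolding t_def by (simp add: nrm_smul av_inverse divide_inverse mult.commute)
  also have "\<dots> < rad m" using q avc by (simp add: divide_less_eq mult.commute)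
  finally have "y + t \<in> ball y m" unfolding mem_ball by simp
  then have "y + t \<in> ball \<xi> m" using ball_trans cy(2) by blast
  moreover have "smul c (y + t) = \<eta> + \<theta>" unfolding t_def cy(3) smul_add[symmetric] using smul_smul_inverse[OF c0] by simp
  ultimately show "\<eta> + \<theta> \<in> cone \<xi> m" using coneI[OF cy(1)] by metis
  show "nrm av (\<eta> + \<theta>) = nrm av \<eta>" using nrm_add_dominant[of \<theta> \<eta>] th big2 by simp
qed

lemma closureF_mem: "F x \<noteq> 0 \<Longrightarrow> x \<in> closureF av {x. F x \<noteq> 0}"
proof -
  assume "F x \<noteq> 0"
  then have "x \<in> {x. F x \<noteq> 0}" by simp
  then show ?thesis using closureF_sub by (rule subsetD[rotated])
qed

lemma mem_AC_iff: assumes xi: "\<xi> \<noteq> 0"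
  shows "\<xi> \<in> AC av \<Lambda> A \<longleftrightarrow> (\<forall>m. rad m < nrm av \<xi> \<longrightarrow> \<not> boundedF av (cone \<xi> m \<inter> A))"
proof
  assume a: "\<xi> \<in> AC av \<Lambda> A"
  show "\<forall>m. rad m < nrm av \<xi> \<longrightarrow> \<not> boundedF av (cone \<xi> m \<inter> A)"
  proof (intro allI impI notI)
    fix m assume m: "rad m < nrm av \<xi>" and b: "boundedF av (cone \<xi> m \<inter> A)"
    have "cone \<xi> m \<in> {\<Gamma>. is_cone \<Lambda> \<Gamma> \<and> openF av \<Gamma> \<and> boundedF av (\<Gamma> \<inter> A)}"
      using is_cone_cone[OF m] openF_cone b by blast
    then show False using a mem_cone_self[of \<xi> m] unfolding AC_def by blast
  qed
next
  assume h: "\<forall>m. rad m < nrm av \<xi> \<longrightarrow> \<not> boundedF av (cone \<xi> m \<inter> A)"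
  show "\<xi> \<in> AC av \<Lambda> A" unfolding AC_def
  proof (rule DiffI)
    show "\<xi> \<in> {x. x \<noteq> 0}" using xi by simp
    show "\<xi> \<notin> \<Union> {\<Gamma>. is_cone \<Lambda> \<Gamma> \<and> openF av \<Gamma> \<and> boundedF av (\<Gamma> \<inter> A)}"
    proof
      assume "\<xi> \<in> \<Union> {\<Gamma>. is_cone \<Lambda> \<Gamma> \<and> openF av \<Gamma> \<and> boundedF av (\<Gamma> \<inter> A)}"
      then obtain \<Gamma> where G: "is_cone \<Lambda> \<Gamma>" "openF av \<Gamma>" "boundedF av (\<Gamma> \<inter> A)" "\<xi> \<in> \<Gamma>" by blast
      have nx: "nrm av \<xi> > 0" using nrm_pos xi by blast
      obtain m0 where m0: "rad m0 < nrm av \<xi>" using rad_small[OF nx] by blast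
      obtain m where m: "m \<ge> m0" "ball \<xi> m \<subseteq> \<Gamma>" using open_has_ball_ge[OF G(2,4)] by blast
      have mm: "rad m < nrm av \<xi>" using rad_mono[OF m(1)] m0 by linarith
      have "cone \<xi> m \<subseteq> \<Gamma>"
      proof
        fix \<eta> assume "\<eta> \<in> cone \<xi> m"
        then obtain c y where cy: "c \<in> \<Lambda>" "y \<in> ball \<xi> m" "\<eta> = smul c y" by (rule coneE)
        then show "\<eta> \<in> \<Gamma>" using G(1) m(2) unfolding is_cone_def by blast
      qed
      then have "boundedF av (cone \<xi> m \<inter> A)" using G(3) unfolding boundedF_def by blast
      then show False using h mm by blast
    qed
  qed
qed

lemma boundedF_cone_closure_iff:
  "boundedF av (cone \<xi> m \<inter> closureF av {x. F x \<noteq> 0}) \<longleftrightarrow> (\<exists>C. \<forall>\<eta>\<in>cone \<xi> m. F \<eta> \<noteq> 0 \<longrightarrow> nrm av \<eta> \<le> C)"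
proof
  assume "boundedF av (cone \<xi> m \<inter> closureF av {x. F x \<noteq> 0})"
  then obtain C where C: "\<forall>x\<in>cone \<xi> m \<inter> closureF av {x. F x \<noteq> 0}. nrm av x \<le> C" unfolding boundedF_def by blast
  have "\<forall>\<eta>\<in>cone \<xi> m. F \<eta> \<noteq> 0 \<longrightarrow> nrm av \<eta> \<le> C"
  proof (intro ballI impI)
    fix \<eta> assume "\<eta> \<in> cone \<xi> m" "F \<eta> \<noteq> 0"
    moreover have "\<eta> \<in> closureF av {x. F x \<noteq> 0}" using \<open>F \<eta> \<noteq> 0\<close> by (rule closureF_mem)
    ultimately show "nrm av \<eta> \<le> C" using C by blast
  qed
  then show "\<exists>C. \<forall>\<eta>\<in>cone \<xi> m. F \<eta> \<noteq> 0 \<longrightarrow> nrm av \<eta> \<le> C" by blast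
next
  assume "\<exists>C. \<forall>\<eta>\<in>cone \<xi> m. F \<eta> \<noteq> 0 \<longrightarrow> nrm av \<eta> \<le> C"
  then obtain C where C: "\<And>\<eta>. \<eta> \<in> cone \<xi> m \<Longrightarrow> F \<eta> \<noteq> 0 \<Longrightarrow> nrm av \<eta> \<le> C" by blast
  have "\<forall>p\<in>cone \<xi> m \<inter> closureF av {x. F x \<noteq> 0}. nrm av p \<le> max C 0"
  proof
    fix p assume p: "p \<in> cone \<xi> m \<inter> closureF av {x. F x \<noteq> 0}"
    show "nrm av p \<le> max C 0"
    proof (rule ccontr)
      assume np: "\<not> nrm av p \<le> max C 0"
      obtain r where r: "r > 0" "\<forall>z. nrm av (z - p) < r \<longrightarrow> z \<in> cone \<xi> m"
        using openF_cone p unfolding openF_def by blast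
      have "min r (nrm av p) > 0" using r np by simp
      then obtain y where y: "F y \<noteq> 0" "nrm av (y - p) < min r (nrm av p)"
        using p unfolding closureF_def by blast
      have "y \<in> cone \<xi> m" using r y by simp
      then have "nrm av y \<le> C" using C y(1) by blast
      moreover have "nrm av y = nrm av p" using nrm_eq_if_close[of y p] y(2) by simp
      ultimately show False using np by simp
    qed
  qed
  then show "boundedF av (cone \<xi> m \<inter> closureF av {x. F x \<noteq> 0})" unfolding boundedF_def by blast
qed

lemma unbounded_on_cone_iff: "\<not> boundedF av (cone \<xi> m \<inter> closureF av {x. F x \<noteq> 0}) \<longleftrightarrow> unbounded_on_cone F \<xi> m"
  unfolding boundedF_cone_closure_iff unbounded_on_cone_def by (meson not_le)

lemma mem_AC_suppf_iff: assumes "\<xi> \<noteq> 0"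
  shows "\<xi> \<in> AC av \<Lambda> (suppf av F) \<longleftrightarrow> (\<forall>m. rad m < nrm av \<xi> \<longrightarrow> unbounded_on_cone F \<xi> m)"
  unfolding mem_AC_iff[OF assms] suppf_def unbounded_on_cone_iff ..

lemma const_on_balls_wave: "rad M * nrm av z \<le> 1 \<Longrightarrow> const_on_balls (wave z) M"
  unfolding const_on_balls_def
proof (intro allI ballI)
  fix a t assume h: "rad M * nrm av z \<le> 1" and t: "t \<in> ball a M"
  have "nrm av (t - a) * nrm av z \<le> rad M * nrm av z"
    using t unfolding mem_ball by (intro mult_right_mono) auto
  then have "wave z (t - a) = 1" using h by (intro wave_eq_1_if_nrm_le) linarith
  then show "wave z t = wave z a" using wave_add[of z a "t - a"] by simp
qed

lemma const_on_balls_mult: "const_on_balls f M \<Longrightarrow> const_on_balls g M \<Longrightarrow> const_on_balls (\<lambda>x. f x * g x) M"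
  unfolding const_on_balls_def by simp

lemma const_on_balls_const: "const_on_balls (\<lambda>x. c) M" unfolding const_on_balls_def by simp

section \<open>Averaging wave packets over frequencies\<close>

text \<open>The Fourier transform of the indicator of a ball of frequencies is a wave packet, so a
  wave packet is an average of plane waves; Fubini moves the distribution inside the average.\<close>

lemma I_ind_ball_waves:
  "I (\<lambda>\<eta>. ind (ball c r) \<eta> * wave \<eta> (- y) * wave \<eta> z) = vol r * wave c (- y) * packet y (- r) c z"
proof -
  have "(\<lambda>\<eta>. ind (ball c r) \<eta> * wave \<eta> (- y) * wave \<eta> z) = (\<lambda>\<eta>. ind (ball c r) \<eta> * wave (z - y) \<eta>)"
    by (intro ext) (simp add: wave_swap[of "z - y"] wave_diff mult.commute)
  then have "I (\<lambda>\<eta>. ind (ball c r) \<eta> * wave \<eta> (- y) * wave \<eta> z) = FT I \<chi> (ind (ball c r)) (z - y)"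
    by (simp add: FT_wave)
  also have "\<dots> = vol r * wave c (- y) * packet y (- r) c z"
    unfolding FT_ind_ball packet_def by (simp add: wave_swap[of "z - y"] wave_diff indicator_def mem_ball)
  finally show ?thesis .
qed

lemma SF_ind_waves: "(\<lambda>\<eta>. ind (ball c r) \<eta> * wave \<eta> a * wave \<eta> z) \<in> \<S>"
  using SF_mult[OF SF_mult[OF SF_ind_ball locally_const_wave] locally_const_wave, of c r a z]
  by (simp add: wave_swap[of _ a] wave_swap[of _ z])

lemma const_on_balls_ind_waves:
  assumes "M \<ge> r" "rad M * nrm av a \<le> 1" "rad M * nrm av z \<le> 1"
  shows "const_on_balls (\<lambda>\<eta>. ind (ball c r) \<eta> * wave \<eta> a * wave \<eta> z) M"
proof -
  have "const_on_balls (\<lambda>\<eta>. ind (ball c r) \<eta> * wave a \<eta> * wave z \<eta>) M"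
    using assms by (intro const_on_balls_mult const_on_balls_ind_ball const_on_balls_wave)
  then show ?thesis by (simp add: wave_swap[of _ a] wave_swap[of _ z])
qed

lemma distr_wave_average:
  assumes d: "distr v" and g: "g \<in> \<S>"
  shows "vol r * wave c (- y) * v (\<lambda>z. g z * packet y (- r) c z) =
    I (\<lambda>\<eta>. ind (ball c r) \<eta> * wave \<eta> (- y) * v (\<lambda>z. g z * wave \<eta> z))"
proof -
  obtain Kg where Kg: "\<And>z. g z \<noteq> 0 \<Longrightarrow> nrm av z \<le> rad Kg"
    using SF_bounded_supp[OF g] unfolding bounded_supp_ball mem_ball_0 by blast
  define R where "R = max (rad Kg) (nrm av y)"
  have "R \<ge> 0" unfolding R_def by (simp add: le_max_iff_disj)
  then obtain M where M: "M \<ge> r" "rad M * R \<le> 1" by (rule rad_mult_le_1)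
  obtain K1 where K1: "rad K1 > nrm av c" using rad_big by blast
  have KM: "min r K1 \<le> M" using M(1) by simp
  define h where "h = (\<lambda>z \<eta>. g z * (ind (ball c r) \<eta> * wave \<eta> (- y) * wave \<eta> z))"
  have h_S: "(\<lambda>z. h z \<eta>) \<in> \<S>" for \<eta>
    unfolding h_def by (intro SF_mult[OF g] locally_const_mult locally_const_wave locally_const_const)
  have h_const: "const_on_balls (h z) M" for z
  proof (cases "g z = 0")
    case False
    have "nrm av z \<le> R" "nrm av (- y) \<le> R" using Kg[OF False] unfolding R_def by auto
    then have "rad M * nrm av z \<le> 1" "rad M * nrm av (- y) \<le> 1"
      using M(2) by (meson mult_left_mono order.trans rad_nonneg)+
    then show ?thesis unfolding h_def
      by (intro const_on_balls_mult const_on_balls_const const_on_balls_ind_waves M(1))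
  qed (simp add: h_def const_on_balls_const)
  have h_supp: "\<eta> \<in> ball 0 (min r K1)" if "h z \<eta> \<noteq> 0" for z \<eta>
  proof -
    have "\<eta> \<in> ball c r" using that unfolding h_def by (cases "\<eta> \<in> ball c r") auto
    then have "nrm av \<eta> \<le> max (nrm av c) (rad r)" by (rule nrm_ball_le)
    also have "\<dots> \<le> rad (min r K1)" using K1 rad_mono[of "min r K1" r] rad_mono[of "min r K1" K1] by simp
    finally show ?thesis unfolding mem_ball_0 .
  qed
  have "I (h z) = vol r * wave c (- y) * (g z * packet y (- r) c z)" for z
    unfolding h_def I_cmult[OF SF_ind_waves] I_ind_ball_waves by simp
  then have "v (\<lambda>z. I (h z)) = v (\<lambda>z. vol r * wave c (- y) * (g z * packet y (- r) c z))"
    by simp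
  moreover have "v (\<lambda>z. h z \<eta>) = ind (ball c r) \<eta> * wave \<eta> (- y) * v (\<lambda>z. g z * wave \<eta> z)" for \<eta>
    using distr_cmult[OF d SF_mult[OF g locally_const_wave], of "ind (ball c r) \<eta> * wave \<eta> (- y)" \<eta>]
    unfolding h_def by (simp add: algebra_simps)
  ultimately show ?thesis
    using distribution_I_commute[OF d KM h_S h_const h_supp]
      distr_cmult[OF d SF_mult_left[OF SF_packet SF_locally_const[OF g]]] by simp
qed

lemma exists_nonzero_wave_near:
  assumes d: "distr v" and g: "g \<in> \<S>" and nz: "v (\<lambda>z. g z * packet y (- r) c z) \<noteq> 0"
  obtains \<eta> where "\<eta> \<in> ball c r" "v (\<lambda>z. g z * wave \<eta> z) \<noteq> 0"
proof (rule ccontr)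
  assume "\<not> thesis"
  then have "ind (ball c r) \<eta> * wave \<eta> (- y) * v (\<lambda>z. g z * wave \<eta> z) = 0" for \<eta>
    using that by (cases "\<eta> \<in> ball c r") auto
  then have "I (\<lambda>\<eta>. ind (ball c r) \<eta> * wave \<eta> (- y) * v (\<lambda>z. g z * wave \<eta> z)) = 0"
    by (simp add: distr_zero[OF distr_I] del: mult_eq_0_iff)
  then show False using distr_wave_average[OF d g, of r c y] nz by simp
qed

lemma exists_nonzero_packet_near:
  assumes d: "distr v" and sub: "ball y (- r) \<subseteq> ball x k" and nz: "v (packet y (- r) c) \<noteq> 0"
  obtains \<eta> where "\<eta> \<in> ball c r" "v (packet x k \<eta>) \<noteq> 0"
proof -
  have "(\<lambda>z. ind (ball x k) z * packet y (- r) c z) = packet y (- r) c"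
    using sub by (intro ext) (auto simp: packet_def split: split_indicator)
  then obtain \<eta> where "\<eta> \<in> ball c r" "v (\<lambda>z. ind (ball x k) z * wave \<eta> z) \<noteq> 0"
    using exists_nonzero_wave_near[OF d SF_ind_ball, of x k y r c] nz by auto
  then show ?thesis using that unfolding packet_def by blast
qed

section \<open>Wave front sets via wave packets\<close>

lemma mem_Sigma_cs_mult_d_iff:
  assumes d: "distr v" and f: "f \<in> \<S>" and xi: "\<xi> \<noteq> 0"
  shows "\<xi> \<in> Sigma_cs av \<Lambda> \<chi> (mult_d f v) \<longleftrightarrow>
    (\<forall>m. rad m < nrm av \<xi> \<longrightarrow> unbounded_on_cone (\<lambda>\<eta>. v (\<lambda>x. f x * wave \<eta> x)) \<xi> m)"
proof -
  have "FTcs av \<chi> (mult_d f v) = (\<lambda>\<eta>. v (\<lambda>x. f x * wave \<eta> x))"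
    using FTcs_mult_d[OF d f] by (rule ext)
  then show ?thesis unfolding Sigma_cs_def using mem_AC_suppf_iff[OF xi] by simp
qed

text \<open>Near x the test function is constant, so cutting off by it is cutting off by a small
  ball around x; the packet of that ball is an average of plane waves with frequencies within
  a bounded distance, which the cone absorbs at large frequencies.\<close>

lemma unbounded_packets_imp_unbounded_mult:
  assumes d: "distr v" and f: "f \<in> \<S>" and fx: "f x \<noteq> 0" and m: "rad m < nrm av \<xi>"
    and packets: "\<And>k. unbounded_on_cone (\<lambda>\<eta>. v (packet x k \<eta>)) \<xi> m"
  shows "unbounded_on_cone (\<lambda>\<eta>. v (\<lambda>y. f y * wave \<eta> y)) \<xi> m"
  unfolding unbounded_on_cone_def
proof
  fix C
  obtain k where k: "\<And>y. y \<in> ball x k \<Longrightarrow> f y = f x"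
    using locally_constD[OF SF_locally_const[OF f]] by blast
  define B where "B = rad (- k)"
  obtain \<eta> where \<eta>: "\<eta> \<in> cone \<xi> m" "nrm av \<eta> > max (max C B) (nrm av \<xi> * B / rad m)"
    "v (packet x k \<eta>) \<noteq> 0"
    using packets[of k] unfolding unbounded_on_cone_def by blast
  have "f z * packet x (- (- k)) \<eta> z = f x * packet x k \<eta> z" for z
  proof (cases "z \<in> ball x k")
    case True
    then show ?thesis using k[OF True] by simp
  qed (simp add: packet_def)
  then have "v (\<lambda>z. f z * packet x (- (- k)) \<eta> z) \<noteq> 0"
    using distr_cmult[OF d SF_packet] fx \<eta>(3) by (simp del: minus_minus)
  then obtain \<zeta> where \<zeta>: "\<zeta> \<in> ball \<eta> (- k)" "v (\<lambda>z. f z * wave \<zeta> z) \<noteq> 0"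
    by (rule exists_nonzero_wave_near[OF d f])
  have "nrm av (\<zeta> - \<eta>) \<le> B" using \<zeta>(1) unfolding B_def mem_ball .
  then have "\<eta> + (\<zeta> - \<eta>) \<in> cone \<xi> m \<and> nrm av (\<eta> + (\<zeta> - \<eta>)) = nrm av \<eta>"
    using \<eta>(2) by (intro cone_add_small[OF m \<eta>(1)]) auto
  then show "\<exists>\<zeta>\<in>cone \<xi> m. C < nrm av \<zeta> \<and> v (\<lambda>y. f y * wave \<zeta> y) \<noteq> 0"
    using \<zeta>(2) \<eta>(2) by (intro bexI[of _ \<zeta>]) auto
qed

lemma WF_iff_packets:
  assumes d: "distr v"
  shows "(x, \<xi>) \<in> WF av \<Lambda> \<chi> v \<longleftrightarrow>
    \<xi> \<noteq> 0 \<and> (\<forall>k m. rad m < nrm av \<xi> \<longrightarrow> unbounded_on_cone (\<lambda>\<eta>. v (packet x k \<eta>)) \<xi> m)"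
proof
  assume "(x, \<xi>) \<in> WF av \<Lambda> \<chi> v"
  then have xi: "\<xi> \<noteq> 0" and s: "\<xi> \<in> Sigma_at av \<Lambda> \<chi> v x" unfolding WF_def by auto
  have "unbounded_on_cone (\<lambda>\<eta>. v (packet x k \<eta>)) \<xi> m" if m: "rad m < nrm av \<xi>" for k m
  proof -
    have "\<xi> \<in> Sigma_cs av \<Lambda> \<chi> (mult_d (ind (ball x k)) v)"
      using s SF_ind_ball unfolding Sigma_at_def by auto
    then show ?thesis
      using mem_Sigma_cs_mult_d_iff[OF d SF_ind_ball xi] m unfolding packet_def by blast
  qed
  then show "\<xi> \<noteq> 0 \<and> (\<forall>k m. rad m < nrm av \<xi> \<longrightarrow> unbounded_on_cone (\<lambda>\<eta>. v (packet x k \<eta>)) \<xi> m)"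
    using xi by blast
next
  assume a: "\<xi> \<noteq> 0 \<and> (\<forall>k m. rad m < nrm av \<xi> \<longrightarrow> unbounded_on_cone (\<lambda>\<eta>. v (packet x k \<eta>)) \<xi> m)"
  have "\<xi> \<in> Sigma_cs av \<Lambda> \<chi> (mult_d f v)" if "f \<in> \<S>" "f x \<noteq> 0" for f
    using a mem_Sigma_cs_mult_d_iff[OF d that(1)] unbounded_packets_imp_unbounded_mult[OF d that] by blast
  then show "(x, \<xi>) \<in> WF av \<Lambda> \<chi> v" unfolding WF_def Sigma_at_def using a by blast
qed

section \<open>Scaling\<close>

text \<open>The only consequence of homogeneity that the proof uses: the zero set of the
  distribution on wave packets is invariant under the dilations by elements of Lambda.\<close>

definition scale_invariant_zeros :: "((('n \<Rightarrow> 'a) \<Rightarrow> complex) \<Rightarrow> complex) \<Rightarrow> bool" where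
  "scale_invariant_zeros v \<longleftrightarrow> (\<forall>a k \<eta> c j. c \<in> \<Lambda> \<longrightarrow> av c = rad (- j) \<longrightarrow>
      (v (packet (smul c a) (k - j) (smul (inverse c) \<eta>)) = 0 \<longleftrightarrow> v (packet a k \<eta>) = 0))"

lemma scale_invariant_zerosD:
  assumes z: "scale_invariant_zeros v" and c: "c \<in> \<Lambda>" "av c = rad (- j)"
  shows "v (packet (smul c y) (- s) \<zeta>) = 0 \<longleftrightarrow> v (packet y (j - s) (smul c \<zeta>)) = 0"
proof -
  have "v (packet (smul c y) ((j - s) - j) (smul (inverse c) (smul c \<zeta>))) = 0 \<longleftrightarrow>
      v (packet y (j - s) (smul c \<zeta>)) = 0"
    using z c unfolding scale_invariant_zeros_def by blast
  then show ?thesis by (simp add: smul_inverse_smul[OF Lambda_nonzero[OF c(1)]])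
qed

lemma packet_scale:
  assumes c0: "c \<noteq> 0" and ac: "av c = rad (- j)"
  shows "packet (smul c a) (k - j) (smul (inverse c) \<eta>) x = packet a k \<eta> (smul (inverse c) x)"
proof -
  have "av (inverse c) = rad j" using ac by (simp add: av_inverse rad_minus)
  then have "smul (inverse c) x \<in> ball (smul (inverse c) (smul c a)) (k - j + j) \<longleftrightarrow> x \<in> ball (smul c a) (k - j)"
    by (rule ball_smul)
  then have "smul (inverse c) x \<in> ball a k \<longleftrightarrow> x \<in> ball (smul c a) (k - j)"
    by (simp add: smul_inverse_smul[OF c0])
  moreover have "wave (smul (inverse c) \<eta>) x = wave \<eta> (smul (inverse c) x)"
    unfolding wave_def dotp_smul_left dotp_smul_right ..
  ultimately show ?thesis unfolding packet_def indicator_def by simp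
qed

lemma homogeneous_imp_scale_invariant_zeros:
  assumes d: "distr u" and h: "homogeneous av \<Lambda> chiL u"
  shows "scale_invariant_zeros u"
  unfolding scale_invariant_zeros_def
proof (intro allI impI)
  fix a k \<eta> c j assume c: "c \<in> \<Lambda>" and ac: "av c = rad (- j)"
  have c0: "c \<noteq> 0" using Lambda_nonzero c by blast
  define \<kappa> :: complex where "\<kappa> = complex_of_real (av c powi (- int (card (UNIV :: 'n set))))"
  have "\<kappa> \<noteq> 0" unfolding \<kappa>_def using av_pos[OF c0] c0 by simp
  have "dil av c (packet a k \<eta>) = (\<lambda>x. \<kappa> * packet (smul c a) (k - j) (smul (inverse c) \<eta>) x)"
    unfolding dil_def \<kappa>_def using packet_scale[OF c0 ac] by simp
  then have "\<kappa> * u (packet (smul c a) (k - j) (smul (inverse c) \<eta>)) = chiL c * u (packet a k \<eta>)"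
    using h c SF_packet distr_cmult[OF d SF_packet] unfolding homogeneous_def by metis
  moreover have "chiL c \<noteq> 0" using h c unfolding homogeneous_def by blast
  ultimately show "u (packet (smul c a) (k - j) (smul (inverse c) \<eta>)) = 0 \<longleftrightarrow> u (packet a k \<eta>) = 0"
    using \<open>\<kappa> \<noteq> 0\<close> by (metis mult_eq_0_iff)
qed

lemma FTd_scale_invariant_zeros:
  assumes d: "distr v" and z: "scale_invariant_zeros v"
  shows "scale_invariant_zeros (FTd I \<chi> v)"
  unfolding scale_invariant_zeros_def
proof (intro allI impI)
  fix a k \<eta> c j assume c: "c \<in> \<Lambda>" and ac: "av c = rad (- j)"
  have "inverse c \<in> \<Lambda>" "av (inverse c) = rad (- (- j))"
    using Lambda_inverse[OF c] ac by (simp_all add: av_inverse rad_minus)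
  then have "v (packet (smul (inverse c) (- \<eta>)) (- (k - j)) (smul c a)) = 0 \<longleftrightarrow>
      v (packet (- \<eta>) (- j - (k - j)) (smul (inverse c) (smul c a))) = 0"
    by (rule scale_invariant_zerosD[OF z])
  then have "v (packet (- smul (inverse c) \<eta>) (- (k - j)) (smul c a)) = 0 \<longleftrightarrow> v (packet (- \<eta>) (- k) a) = 0"
    using Lambda_nonzero[OF c] by (simp add: smul_uminus smul_inverse_smul)
  then show "FTd I \<chi> v (packet (smul c a) (k - j) (smul (inverse c) \<eta>)) = 0 \<longleftrightarrow> FTd I \<chi> v (packet a k \<eta>) = 0"
    unfolding FTd_packet[OF d] by simp
qed

section \<open>The three statements for distributions with scale invariant zeros\<close>

lemma packet_refine:
  assumes d: "distr v" and rr: "r \<le> r'" and nz: "v (packet a r \<eta>) \<noteq> 0"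
  obtains g where "g \<in> ball a r" "v (packet g r' \<eta>) \<noteq> 0"
proof -
  have "packet a r \<eta> = (\<lambda>y. \<Sum>g\<in>grid a r r'. packet g r' \<eta> y)"
    unfolding packet_def ind_ball_expansion[OF rr, of a] by (simp add: sum_distrib_right)
  then have "(\<Sum>g\<in>grid a r r'. v (packet g r' \<eta>)) \<noteq> 0"
    using nz distr_sum[OF d grid_finite, where f="\<lambda>g. packet g r' \<eta>"] SF_packet by simp
  then obtain g where "g \<in> grid a r r'" "v (packet g r' \<eta>) \<noteq> 0"
    by (rule sum.not_neutral_contains_not_neutral)
  then show ?thesis using that grid_subset_ball by blast
qed

lemma packet_shift:
  assumes "nrm av \<theta> \<le> rad (- r)"
  shows "packet g r (\<eta> + \<theta>) = (\<lambda>y. wave \<theta> g * packet g r \<eta> y)"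
proof
  fix y
  show "packet g r (\<eta> + \<theta>) y = wave \<theta> g * packet g r \<eta> y"
  proof (cases "y \<in> ball g r")
    case True
    then have "nrm av (y - g) * nrm av \<theta> \<le> rad r * rad (- r)"
      using assms unfolding mem_ball by (intro mult_mono) auto
    then have "wave \<theta> (y - g) = 1" by (intro wave_eq_1_if_nrm_le) (simp add: rad_minus)
    then have "wave \<theta> y = wave \<theta> g" using wave_add[of \<theta> g "y - g"] by simp
    then show ?thesis unfolding packet_def wave_add_freq by simp
  qed (simp add: packet_def)
qed

lemma suppd_FTd_imp_WF_0:
  assumes d: "distr v" and z: "scale_invariant_zeros v" and xi: "\<xi> \<noteq> 0"
    and supp: "\<xi> \<in> suppd av (FTd I \<chi> v)"
  shows "(0, \<xi>) \<in> WF av \<Lambda> \<chi> v"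
  unfolding WF_iff_packets[OF d] unbounded_on_cone_def
proof (intro conjI xi allI impI)
  fix k m C assume m: "rad m < nrm av \<xi>"
  have nxi: "nrm av \<xi> > 0" using nrm_pos xi by blast
  obtain a r where ar: "ball a r \<subseteq> ball \<xi> m" "FTd I \<chi> v (packet a r 0) \<noteq> 0"
    using supp unfolding suppd_iff_balls[OF distribution_FTd[OF d]] packet_freq_0 by blast
  obtain t where t: "t \<ge> r + k" "rad (- t) > C / nrm av \<xi>" using rad_uminus_big by blast
  have "r \<le> t - k" using t(1) by simp
  then obtain g where g: "g \<in> ball a r" "FTd I \<chi> v (packet g (t - k) 0) \<noteq> 0"
    by (rule packet_refine[OF distribution_FTd[OF d] _ ar(2)])
  define c where "c = w powi (- t)"
  have c: "c \<in> \<Lambda>" "av c = rad (- t)" unfolding c_def using Lambda_unif_powi av_unif_powi by auto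
  have "FTd I \<chi> v (packet (smul c g) (- k) 0) \<noteq> 0"
    using g(2) scale_invariant_zerosD[OF FTd_scale_invariant_zeros[OF d z] c, of g k 0] by simp
  then have "v (packet 0 k (smul c g)) \<noteq> 0" using FTd_packet_nonzero_iff[OF d] by simp
  moreover have gb: "g \<in> ball \<xi> m" using g(1) ar(1) by blast
  moreover have "nrm av (smul c g) > C"
    using nrm_cone_elem[OF c(1) gb m] c(2) t(2) nxi by (simp add: field_simps)
  ultimately show "\<exists>\<eta>\<in>cone \<xi> m. C < nrm av \<eta> \<and> v (packet 0 k \<eta>) \<noteq> 0"
    using coneI[OF c(1)] by blast
qed

lemma WF_0_imp_suppd_FTd:
  assumes d: "distr v" and z: "scale_invariant_zeros v" and xi: "\<xi> \<noteq> 0"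
    and wf: "(0, \<xi>) \<in> WF av \<Lambda> \<chi> v"
  shows "\<xi> \<in> suppd av (FTd I \<chi> v)"
proof (rule ccontr)
  assume "\<xi> \<notin> suppd av (FTd I \<chi> v)"
  then obtain m0 where m0: "\<And>a r. ball a r \<subseteq> ball \<xi> m0 \<Longrightarrow> FTd I \<chi> v (packet a r 0) = 0"
    unfolding suppd_iff_balls[OF distribution_FTd[OF d]] packet_freq_0 by blast
  have nxi: "nrm av \<xi> > 0" using nrm_pos xi by blast
  obtain m where m: "m \<ge> m0" "rad m < nrm av \<xi>" using rad_small_ge[OF nxi] by blast
  obtain \<eta> where \<eta>: "\<eta> \<in> cone \<xi> m" "nrm av \<eta> > rad (- m) * nrm av \<xi>" "v (packet 0 0 \<eta>) \<noteq> 0"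
    using wf m(2) unfolding WF_iff_packets[OF d] unbounded_on_cone_def by blast
  obtain c y j where cy: "c \<in> \<Lambda>" "y \<in> ball \<xi> m" "\<eta> = smul c y" "av c = rad (- j)"
    "nrm av \<eta> = rad (- j) * nrm av \<xi>"
    using \<eta>(1) m(2) by (rule cone_elemE)
  have "j \<ge> m" using \<eta>(2) cy(5) nxi rad_less_iff[of "- m" "- j"] by simp
  then have "ball y j \<subseteq> ball \<xi> m0" using ball_subset[OF cy(2)] ball_antimono[OF m(1)] by blast
  then have "FTd I \<chi> v (packet \<eta> 0 0) = 0"
    using m0 scale_invariant_zerosD[OF FTd_scale_invariant_zeros[OF d z] cy(1,4), of y 0 0] cy(3) by simp
  then show False using \<eta>(3) FTd_packet_nonzero_iff[OF d] by simp
qed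

lemma WF_imp_WF_FTd:
  assumes d: "distr v" and z: "scale_invariant_zeros v" and x0: "x \<noteq> 0"
    and wf: "(x, \<xi>) \<in> WF av \<Lambda> \<chi> v"
  shows "(\<xi>, - x) \<in> WF av \<Lambda> \<chi> (FTd I \<chi> v)"
  unfolding WF_iff_packets[OF distribution_FTd[OF d]] unbounded_on_cone_def
proof (intro conjI allI impI)
  show "- x \<noteq> 0" using x0 by simp
  fix s m C assume m: "rad m < nrm av (- x)"
  have "\<xi> \<noteq> 0" using wf unfolding WF_def by blast
  then have nxi: "nrm av \<xi> > 0" by (rule nrm_pos)
  have nx: "nrm av x > 0" using nrm_pos[OF x0] .
  obtain mm where mm: "mm \<ge> s" "rad mm < nrm av \<xi>" using rad_small_ge[OF nxi] by blast
  obtain \<eta> where \<eta>: "\<eta> \<in> cone \<xi> mm" "nrm av \<eta> > nrm av \<xi> * max (C / nrm av x) (rad (- (m + s)))"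
    "v (packet x m \<eta>) \<noteq> 0"
    using wf mm(2) unfolding WF_iff_packets[OF d] unbounded_on_cone_def by blast
  obtain c y j where cy: "c \<in> \<Lambda>" "y \<in> ball \<xi> mm" "\<eta> = smul c y" "av c = rad (- j)"
    "nrm av \<eta> = rad (- j) * nrm av \<xi>"
    using \<eta>(1) mm(2) by (rule cone_elemE)
  have "max (C / nrm av x) (rad (- (m + s))) < rad (- j)"
    using \<eta>(2) cy(5) nxi by (simp add: mult.commute)
  then have bigC: "C < rad (- j) * nrm av x" and "m \<le> j - s"
    using nx by (auto simp: field_simps rad_less_iff)
  then obtain g where g: "g \<in> ball x m" "v (packet g (j - s) \<eta>) \<noteq> 0"
    using packet_refine[OF d _ \<eta>(3)] by blast
  have "nrm av (smul c (\<xi> - y)) = rad (- j) * nrm av (y - \<xi>)"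
    by (simp add: nrm_smul cy(4) nrm_commute)
  also have "\<dots> \<le> rad (- j) * rad s"
    using cy(2) rad_mono[OF mm(1)] unfolding mem_ball by (intro mult_left_mono) auto
  finally have "nrm av (smul c (\<xi> - y)) \<le> rad (- (j - s))" by (simp add: rad_add[symmetric])
  from packet_shift[OF this, of g \<eta>] have "v (packet g (j - s) (smul c \<xi>)) \<noteq> 0"
    using g(2) distr_cmult[OF d SF_packet] by (simp add: cy(3) smul_add)
  then have "FTd I \<chi> v (packet \<xi> s (smul c (- g))) \<noteq> 0"
    using scale_invariant_zerosD[OF z cy(1,4)] FTd_packet_nonzero_iff[OF d] by (simp add: smul_uminus)
  moreover have "- g \<in> ball (- x) m" using g(1) ball_uminus by simp
  then have "smul c (- g) \<in> cone (- x) m" "nrm av (smul c (- g)) = rad (- j) * nrm av x"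
    using coneI[OF cy(1)] nrm_cone_elem[OF cy(1) _ m] cy(4) by auto
  ultimately show "\<exists>\<zeta>\<in>cone (- x) m. C < nrm av \<zeta> \<and> FTd I \<chi> v (packet \<xi> s \<zeta>) \<noteq> 0"
    using bigC by (intro bexI[of _ "smul c (- g)"]) auto
qed

lemma WF_FTd_imp_WF:
  assumes d: "distr v" and z: "scale_invariant_zeros v" and x0: "x \<noteq> 0" and xi: "\<xi> \<noteq> 0"
    and wf: "(\<xi>, - x) \<in> WF av \<Lambda> \<chi> (FTd I \<chi> v)"
  shows "(x, \<xi>) \<in> WF av \<Lambda> \<chi> v"
  unfolding WF_iff_packets[OF d] unbounded_on_cone_def
proof (intro conjI xi allI impI)
  fix k m C assume m: "rad m < nrm av \<xi>"
  have nxi: "nrm av \<xi> > 0" using nrm_pos[OF xi] .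
  have nx: "nrm av (- x) > 0" using nrm_pos x0 by simp
  obtain mm where mm: "mm \<ge> k" "rad mm < nrm av (- x)" using rad_small_ge[OF nx] by blast
  obtain \<zeta> where \<zeta>: "\<zeta> \<in> cone (- x) mm" "nrm av \<zeta> > nrm av x * max (C / nrm av \<xi>) (rad (- (k + m)))"
    "FTd I \<chi> v (packet \<xi> m \<zeta>) \<noteq> 0"
    using wf mm(2) unfolding WF_iff_packets[OF distribution_FTd[OF d]] unbounded_on_cone_def by blast
  obtain c y j where cy: "c \<in> \<Lambda>" "y \<in> ball (- x) mm" "\<zeta> = smul c y" "av c = rad (- j)"
    "nrm av \<zeta> = rad (- j) * nrm av (- x)"
    using \<zeta>(1) mm(2) by (rule cone_elemE)
  have "max (C / nrm av \<xi>) (rad (- (k + m))) < rad (- j)"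
    using \<zeta>(2) cy(5) nx by (simp add: mult.commute)
  then have bigC: "C < rad (- j) * nrm av \<xi>" and jk: "k \<le> j - m"
    using nxi by (auto simp: field_simps rad_less_iff)
  have "- y \<in> ball x k" using cy(2) ball_uminus[of "- y" x] ball_antimono[OF mm(1)] by auto
  then have "ball (- y) (- (m - j)) \<subseteq> ball x k" using ball_subset jk by simp
  moreover have "v (packet (- y) (- (m - j)) (smul c \<xi>)) \<noteq> 0"
    using \<zeta>(3) FTd_packet_nonzero_iff[OF d] scale_invariant_zerosD[OF z cy(1,4), of "- y" m \<xi>]
    by (simp add: cy(3) smul_uminus)
  ultimately obtain \<eta> where \<eta>: "\<eta> \<in> ball (smul c \<xi>) (m - j)" "v (packet x k \<eta>) \<noteq> 0"
    by (rule exists_nonzero_packet_near[OF d])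
  have c0: "c \<noteq> 0" using Lambda_nonzero[OF cy(1)] .
  have "nrm av (smul (inverse c) \<eta> - \<xi>) = rad j * nrm av (\<eta> - smul c \<xi>)"
    using smul_diff[of "inverse c" \<eta> "smul c \<xi>"]
    by (simp add: smul_inverse_smul[OF c0] nrm_smul av_inverse cy(4) rad_minus)
  also have "\<dots> \<le> rad j * rad (m - j)" using \<eta>(1) unfolding mem_ball by (intro mult_left_mono) auto
  finally have "smul (inverse c) \<eta> \<in> ball \<xi> m" unfolding mem_ball by (simp add: rad_add[symmetric])
  moreover have "\<eta> = smul c (smul (inverse c) \<eta>)" using smul_smul_inverse[OF c0] by (rule sym)
  ultimately have "\<eta> \<in> cone \<xi> m" "nrm av \<eta> = rad (- j) * nrm av \<xi>"
    using coneI[OF cy(1)] nrm_cone_elem[OF cy(1) _ m] cy(4) by metis+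
  then show "\<exists>\<eta>\<in>cone \<xi> m. C < nrm av \<eta> \<and> v (packet x k \<eta>) \<noteq> 0"
    using bigC \<eta>(2) by (intro bexI[of _ \<eta>]) auto
qed

section \<open>Fourier inversion on supports\<close>

lemma FT_FT: "f \<in> \<S> \<Longrightarrow> FT I \<chi> (FT I \<chi> f) = (\<lambda>y. f (- y))"
  using FT_FT_apply by (intro ext) simp

lemma FTd_FTd_ind_ball: assumes d: "distr u"
  shows "FTd I \<chi> (FTd I \<chi> u) (ind (ball a r)) = u (ind (ball (- a) r))"
proof -
  have "(\<lambda>y. ind (ball a r) (- y)) = ind (ball (- a) r)"
  proof
    fix y show "ind (ball a r) (- y) = ind (ball (- a) r) y"
      using ball_uminus[of "- y" a r] by (simp add: indicator_def)
  qed
  then show ?thesis unfolding FTd_def FT_FT[OF SF_ind_ball] by simp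
qed

lemma ball_subset_uminus: "ball a r \<subseteq> ball b k \<Longrightarrow> ball (- a) r \<subseteq> ball (- b) k"
proof
  fix z assume s: "ball a r \<subseteq> ball b k" and z: "z \<in> ball (- a) r"
  have "- z \<in> ball a r" using z ball_uminus[of "- z" a r] by simp
  then have "- z \<in> ball b k" using s by blast
  then show "z \<in> ball (- b) k" using ball_uminus[of "- z" b k] by simp
qed

lemma suppd_FTd_FTd: assumes d: "distr u"
  shows "- x \<in> suppd av (FTd I \<chi> (FTd I \<chi> u)) \<longleftrightarrow> x \<in> suppd av u"
proof -
  have dd: "distr (FTd I \<chi> (FTd I \<chi> u))" by (rule distribution_FTd[OF distribution_FTd[OF d]])
  show ?thesis unfolding suppd_iff_balls[OF dd] suppd_iff_balls[OF d] FTd_FTd_ind_ball[OF d]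
  proof
    assume h: "\<forall>k. \<exists>a r. ball a r \<subseteq> ball (- x) k \<and> u (ind (ball (- a) r)) \<noteq> 0"
    show "\<forall>k. \<exists>a r. ball a r \<subseteq> ball x k \<and> u (ind (ball a r)) \<noteq> 0"
    proof
      fix k
      obtain a r where ar: "ball a r \<subseteq> ball (- x) k" "u (ind (ball (- a) r)) \<noteq> 0" using h by blast
      have "ball (- a) r \<subseteq> ball x k" using ball_subset_uminus[OF ar(1)] by simp
      then show "\<exists>a r. ball a r \<subseteq> ball x k \<and> u (ind (ball a r)) \<noteq> 0" using ar(2) by blast
    qed
  next
    assume h: "\<forall>k. \<exists>a r. ball a r \<subseteq> ball x k \<and> u (ind (ball a r)) \<noteq> 0"
    show "\<forall>k. \<exists>a r. ball a r \<subseteq> ball (- x) k \<and> u (ind (ball (- a) r)) \<noteq> 0"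
    proof
      fix k
      obtain a r where ar: "ball a r \<subseteq> ball x k" "u (ind (ball a r)) \<noteq> 0" using h by blast
      have "ball (- a) r \<subseteq> ball (- x) k" using ball_subset_uminus[OF ar(1)] .
      then show "\<exists>a' r'. ball a' r' \<subseteq> ball (- x) k \<and> u (ind (ball (- a') r')) \<noteq> 0"
        using ar(2) by (intro exI[of _ "- a"] exI[of _ r]) simp
    qed
  qed
qed

end

theorem theoremA1:
  fixes av :: "'a::field_char_0 \<Rightarrow> real" and w :: 'a and \<chi> :: "'a \<Rightarrow> complex"
    and I :: "(('n::finite \<Rightarrow> 'a) \<Rightarrow> complex) \<Rightarrow> complex"
    and \<Lambda> :: "'a set" and u :: "(('n \<Rightarrow> 'a) \<Rightarrow> complex) \<Rightarrow> complex"
  assumes "nonarch_local_field av w"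
    and "additive_char av \<chi>"
    and "self_dual_haar av \<chi> I"
    and "fin_index_subgroup \<Lambda>" and "w \<in> \<Lambda>"
    and "distribution av u"
    and "\<exists>chiL. homogeneous av \<Lambda> chiL u"
  shows "(\<forall>x \<xi>. x \<noteq> 0 \<longrightarrow> \<xi> \<noteq> 0 \<longrightarrow>
            ((x, \<xi>) \<in> WF av \<Lambda> \<chi> u \<longleftrightarrow> (\<xi>, - x) \<in> WF av \<Lambda> \<chi> (FTd I \<chi> u))) \<and>
         (\<forall>x. x \<noteq> 0 \<longrightarrow>
            (x \<in> suppd av u \<longleftrightarrow> (0, - x) \<in> WF av \<Lambda> \<chi> (FTd I \<chi> u))) \<and>
         (\<forall>\<xi>. \<xi> \<noteq> 0 \<longrightarrow>
            (\<xi> \<in> suppd av (FTd I \<chi> u) \<longleftrightarrow> (0, \<xi>) \<in> WF av \<Lambda> \<chi> u))"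
proof -
  interpret local_field_fourier av w \<chi> I \<Lambda> using assms(1-5) by unfold_locales
  note d = assms(6)
  obtain chiL where "homogeneous av \<Lambda> chiL u" using assms(7) by blast
  then have z: "scale_invariant_zeros u" by (rule homogeneous_imp_scale_invariant_zeros[OF d])
  have statement3: "\<xi> \<in> suppd av (FTd I \<chi> v) \<longleftrightarrow> (0, \<xi>) \<in> WF av \<Lambda> \<chi> v"
    if "distribution av v" "scale_invariant_zeros v" "\<xi> \<noteq> 0" for v \<xi>
    using suppd_FTd_imp_WF_0[OF that] WF_0_imp_suppd_FTd[OF that] by blast
  show ?thesis
  proof (intro conjI allI impI)
    fix x \<xi> :: "'n \<Rightarrow> 'a" assume "x \<noteq> 0" "\<xi> \<noteq> 0"
    then show "(x, \<xi>) \<in> WF av \<Lambda> \<chi> u \<longleftrightarrow> (\<xi>, - x) \<in> WF av \<Lambda> \<chi> (FTd I \<chi> u)"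
      using WF_imp_WF_FTd[OF d z] WF_FTd_imp_WF[OF d z] by blast
  next
    fix x :: "'n \<Rightarrow> 'a" assume "x \<noteq> 0"
    then show "x \<in> suppd av u \<longleftrightarrow> (0, - x) \<in> WF av \<Lambda> \<chi> (FTd I \<chi> u)"
      using statement3[OF distribution_FTd[OF d] FTd_scale_invariant_zeros[OF d z], of "- x"]
        suppd_FTd_FTd[OF d] by simp
  next
    fix \<xi> :: "'n \<Rightarrow> 'a" assume "\<xi> \<noteq> 0"
    then show "\<xi> \<in> suppd av (FTd I \<chi> u) \<longleftrightarrow> (0, \<xi>) \<in> WF av \<Lambda> \<chi> u"
      by (rule statement3[OF d z])
  qed
qed

end
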